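(* Let $\mathcal O$ be a polycube with orthogonally convex layers and let $1\le i\le m-1$, with $L_i,R_i$ and the $i$-pointer determined by the selection procedure described in the context. For every unvisited $i$-band cell $r$: (a) $i$-clip$(r)$ is non-empty and lies on top of $\mathcal O_i$, and (b) $i$-clip$(r)$ is not adjacent to any $(i+1)$-band cell parallel to $r$. Moreover, (a) and (b) also hold with $i$-clip$(r)$ replaced by $i$-beam$(r)$.
   Context: A polycube $\mathcal O$ is an orthogonal polyhedron homeomorphic to a sphere formed as a union of unit cubes glued along entire faces; its surface is subdivided into unit squares called cells. Let $z_0<\dots<z_m$ be the distinct $z$-coordinates of vertices of $\mathcal O$; the $i$-plane is $z=z_i$; the layer $\mathcal O_i$ is the part of $\mathcal O$ between the $(i-1)$- and $i$-planes. $\mathcal O$ has orthogonally convex layers if each $\mathcal O_i$ meets every line parallel to a coordinate axis in a single segment or not at all. The $i$-band is the cyclic sequence of vertical surface cells between the $(i-1)$- and $i$-planes. A face is a maximal edge-connected set of coplanar cells; an $i$-face lies in the $i$-plane, either on top of $\mathcal O_i$ (top face) or on the bottom of $\mathcal O_{i+1}$ (bottom face). Adjacent means boundaries share a cell edge. Cells are parallel if in parallel planes; normals are outward normals; cw/ccw around a band is as viewed from $+z$. Beams: for a band cell $a$ (on the $i$- or $(i+1)$-band) whose horizontal edge $e$ in the $i$-plane is adjacent to an $i$-face, $i$-beam$(a)$ is the portion of that $i$-face illuminated by rays from $e$ in the horizontal direction orthogonal to $a$; otherwise it is empty. A nonempty beam has two anchors: $a$ and the band cell parallel to $a$ adjacent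 to the beam at its other end; both anchors define the same beam. Selection procedure. Each $i$-band gets a direction ($i$-pointer $\in\{cw,ccw\}$) and cells $L_i,R_i$. For $i$-band cells $a,b$, $i$-band$[a,b]$ is the closed band segment from $a$ to $b$ in the direction of the $i$-pointer. For an $i$-band cell $r$, $i$-clip$(r)$ is empty if $i$-beam$(r)$ is empty, and otherwise is the portion of the $i$-face containing $i$-beam$(r)$ delimited by (and including) $i$-beam$(r)$ and extending from it in the direction of the $i$-pointer from $r$. Initialization: 1-pointer $=ccw$; choose a top 1-face $F$ and two opposite cell edges $e_1,e_2$ on its boundary with $e_1$ adjacent to the 1-band and $e_2$ adjacent to the 2-band; $R_1$ is the 1-band cell adjacent to $e_1$, $L_1$ is the 1-band cell adjacent to $R_1$ in the ccw direction, the 1-bridge is 1-beam$(R_1)$, $L_2$ is the 2-band cell adjacent to $e_2$, and the 2-pointer is $ccw$. Recursive step ($i\ge 2$, given $L_i$ and the $i$-pointer): walking around the $i$-band starting at $L_i$ in the direction of the $i$-pointer, $R_i$ is the last encountered $i$-band cell such that $i$-clip$(R_i)$ is empty or adjacent to an $(i+1)$-band cell parallel to $R_i$. If $i$-clip$(R_i)$ is empty, $L_{i+1}$ is the $(i+1)$-band cell adjacent to $R_i$, the $i$-bridge is empty and the $(i+1)$-pointer equals the $i$-pointer. Otherwise, partitioning $i$-clip$(R_i)$ into beams parallel to $i$-beam$(R_i)$: $L_{i+1}$ is the $(i+1)$-band cell parallel to $R_i$ and adjacent to $i$-clip$(R_i)$ minimizing the number of beams delimited by $i$-beam$(R_i)$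 and $i$-beam$(L_{i+1})$, ties broken by minimum Manhattan distance to $R_i$; the $i$-bridge consists of $i$-beam$(R_i)$, $i$-beam$(L_{i+1})$ and the beams between them; the $(i+1)$-pointer equals the $i$-pointer if $R_i$ and $L_{i+1}$ have the same normal and is opposite otherwise. An $i$-band cell is visited if it belongs to $i$-band$[L_i,R_i]$ and unvisited otherwise. *)

theory Defs
  imports "HOL-Analysis.Analysis"
begin

text \<open>A polycube is a finite set of unit cubes; the cube with integer lower corner
  (x,y,z) occupies [x,x+1] x [y,y+1] x [z,z+1].  A surface cell is a pair (c,d) of a cube
  c and an outward direction d such that the neighbouring cube c + d is absent.\<close>

datatype dir = XP | XN | YP | YN | ZP | ZN
datatype pointer = CW | CCW

type_synonym pt = "int \<times> int \<times> int"
type_synonym cell = "pt \<times> dir"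

fun dvec :: "dir \<Rightarrow> pt" where
  "dvec XP = (1,0,0)" | "dvec XN = (-1,0,0)"
| "dvec YP = (0,1,0)" | "dvec YN = (0,-1,0)"
| "dvec ZP = (0,0,1)" | "dvec ZN = (0,0,-1)"

fun hvec :: "dir \<Rightarrow> int \<times> int" where
  "hvec XP = (1,0)" | "hvec XN = (-1,0)"
| "hvec YP = (0,1)" | "hvec YN = (0,-1)"
| "hvec ZP = (0,0)" | "hvec ZN = (0,0)"

fun axis :: "dir \<Rightarrow> nat" where
  "axis XP = 0" | "axis XN = 0" | "axis YP = 1" | "axis YN = 1" | "axis ZP = 2" | "axis ZN = 2"

fun opp :: "dir \<Rightarrow> dir" where
  "opp XP = XN" | "opp XN = XP" | "opp YP = YN" | "opp YN = YP" | "opp ZP = ZN" | "opp ZN = ZP"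

text \<open>Rotation by 90 degrees counterclockwise / clockwise as viewed from +z.\<close>
fun rot_ccw :: "dir \<Rightarrow> dir" where
  "rot_ccw XP = YP" | "rot_ccw YP = XN" | "rot_ccw XN = YN" | "rot_ccw YN = XP"
| "rot_ccw ZP = ZP" | "rot_ccw ZN = ZN"

fun rot_cw :: "dir \<Rightarrow> dir" where
  "rot_cw YP = XP" | "rot_cw XN = YP" | "rot_cw YN = XN" | "rot_cw XP = YN"
| "rot_cw ZP = ZP" | "rot_cw ZN = ZN"

fun flip :: "pointer \<Rightarrow> pointer" where
  "flip CW = CCW" | "flip CCW = CW"

text \<open>Direction of travel along a band at a cell with outward normal d.\<close>
fun tdir :: "pointer \<Rightarrow> dir \<Rightarrow> dir" where
  "tdir CCW d = rot_ccw d" | "tdir CW d = rot_cw d"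

fun padd :: "pt \<Rightarrow> pt \<Rightarrow> pt" where
  "padd (a,b,c) (x,y,z) = (a+x, b+y, c+z)"

fun zc :: "pt \<Rightarrow> int" where "zc (x,y,z) = z"

fun fp :: "pt \<Rightarrow> int \<times> int" where "fp (x,y,z) = (x,y)"

fun l1 :: "pt \<Rightarrow> pt \<Rightarrow> int" where
  "l1 (a,b,c) (x,y,z) = \<bar>a-x\<bar> + \<bar>b-y\<bar> + \<bar>c-z\<bar>"

fun add2 :: "int \<times> int \<Rightarrow> int \<times> int \<Rightarrow> int \<times> int" where
  "add2 (a,b) (x,y) = (a+x, b+y)"

fun scale2 :: "int \<Rightarrow> int \<times> int \<Rightarrow> int \<times> int" where
  "scale2 k (x,y) = (k*x, k*y)"

fun dot2 :: "int \<times> int \<Rightarrow> int \<times> int \<Rightarrow> int" where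
  "dot2 (a,b) (x,y) = a*x + b*y"

definition surface_cell :: "pt set \<Rightarrow> cell \<Rightarrow> bool" where
  "surface_cell P a \<longleftrightarrow> fst a \<in> P \<and> padd (fst a) (dvec (snd a)) \<notin> P"

definition horiz :: "dir \<Rightarrow> bool" where
  "horiz d \<longleftrightarrow> d \<in> {XP, XN, YP, YN}"

definition parallel :: "cell \<Rightarrow> cell \<Rightarrow> bool" where
  "parallel a b \<longleftrightarrow> axis (snd a) = axis (snd b)"

text \<open>Offsets (from the lower corner of the cube) of the four corners of the face of a unit cube
  in direction d.\<close>
definition ifacefsets :: "dir \<Rightarrow> pt set" where
  "ifacefsets d = {(u,v,w). u \<in> {0,1} \<and> v \<in> {0,1} \<and> w \<in> {0,1} \<and>
     (case d of XP \<Rightarrow> u = 1 | XN \<Rightarrow> u = 0 | YP \<Rightarrow> v = 1 | YN \<Rightarrow> v = 0 | ZP \<Rightarrow> w = 1 | ZN \<Rightarrow> w = 0)}"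

definition corners :: "cell \<Rightarrow> pt set" where
  "corners a = (\<lambda>u. padd (fst a) u) ` ifacefsets (snd a)"

text \<open>A cell edge is represented by the set of its two endpoints.\<close>
definition cell_edges :: "cell \<Rightarrow> pt set set" where
  "cell_edges a = {{p, q} | p q. p \<in> corners a \<and> q \<in> corners a \<and> l1 p q = 1}"

definition cell_adj :: "cell \<Rightarrow> cell \<Rightarrow> bool" where
  "cell_adj a b \<longleftrightarrow> a \<noteq> b \<and> cell_edges a \<inter> cell_edges b \<noteq> {}"

definition adj_to :: "cell \<Rightarrow> cell set \<Rightarrow> bool" where
  "adj_to a S \<longleftrightarrow> (\<exists>s\<in>S. cell_adj a s)"

definition adj_in :: "cell set \<Rightarrow> (cell \<times> cell) set" where
  "adj_in S = {(a,b). a \<in> S \<and> b \<in> S \<and> cell_adj a b}"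

fun cube_pts :: "pt \<Rightarrow> (real \<times> real \<times> real) set" where
  "cube_pts (x,y,z) = {(a,b,c). of_int x \<le> a \<and> a \<le> of_int x + 1 \<and>
      of_int y \<le> b \<and> b \<le> of_int y + 1 \<and> of_int z \<le> c \<and> c \<le> of_int z + 1}"

definition solid :: "pt set \<Rightarrow> (real \<times> real \<times> real) set" where
  "solid P = \<Union> (cube_pts ` P)"

definition polycube :: "pt set \<Rightarrow> bool" where
  "polycube P \<longleftrightarrow> finite P \<and> P \<noteq> {} \<and>
     frontier (solid P) homeomorphic sphere (0 :: real \<times> real \<times> real) 1"

text \<open>z-levels: z_0 = zlo P and z_j = zlo P + j, for j = 0..m with m = num_m P.
  Layer i (1 \<le> i \<le> m) consists of the cubes with lower z-coordinate lvl P i = z_(i-1).\<close>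
definition zlo :: "pt set \<Rightarrow> int" where "zlo P = Min (zc ` P)"

definition num_m :: "pt set \<Rightarrow> nat" where
  "num_m P = nat (Max (zc ` P) + 1 - zlo P)"

definition lvl :: "pt set \<Rightarrow> nat \<Rightarrow> int" where
  "lvl P i = zlo P + int i - 1"

definition layer_solid :: "pt set \<Rightarrow> nat \<Rightarrow> (real \<times> real \<times> real) set" where
  "layer_solid P i = \<Union> (cube_pts ` {c \<in> P. zc c = lvl P i})"

fun unit_axis :: "nat \<Rightarrow> real \<times> real \<times> real" where
  "unit_axis 0 = (1,0,0)" | "unit_axis (Suc 0) = (0,1,0)" | "unit_axis _ = (0,0,1)"

definition axis_line :: "nat \<Rightarrow> real \<times> real \<times> real \<Rightarrow> (real \<times> real \<times> real) set" where
  "axis_line k q = {q + s *\<^sub>R unit_axis k | s. True}"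

definition ortho_convex_layers :: "pt set \<Rightarrow> bool" where
  "ortho_convex_layers P \<longleftrightarrow> (\<forall>i. 1 \<le> i \<and> i \<le> num_m P \<longrightarrow>
     (\<forall>k < 3. \<forall>q. layer_solid P i \<inter> axis_line k q = {} \<or>
        (\<exists>a b. layer_solid P i \<inter> axis_line k q = closed_segment a b)))"

text \<open>Each layer is a connected set (so that each band is a single cyclic sequence).\<close>
definition connected_layers :: "pt set \<Rightarrow> bool" where
  "connected_layers P \<longleftrightarrow> (\<forall>i. 1 \<le> i \<and> i \<le> num_m P \<longrightarrow> connected (layer_solid P i))"

definition band :: "pt set \<Rightarrow> nat \<Rightarrow> cell set" where
  "band P i = {a. surface_cell P a \<and> horiz (snd a) \<and> zc (fst a) = lvl P i}"

text \<open>Surface cells lying in the i-plane z = z_i: tops of cubes of layer i, bottoms of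
  cubes of layer i+1.\<close>
definition hcells :: "pt set \<Rightarrow> nat \<Rightarrow> cell set" where
  "hcells P i = {a. surface_cell P a \<and>
     ((snd a = ZP \<and> zc (fst a) = lvl P i) \<or> (snd a = ZN \<and> zc (fst a) = lvl P i + 1))}"

definition iface :: "pt set \<Rightarrow> nat \<Rightarrow> cell \<Rightarrow> cell set" where
  "iface P i g = {h. (g, h) \<in> rtrancl (adj_in (hcells P i))}"

definition is_top_face :: "pt set \<Rightarrow> nat \<Rightarrow> cell set \<Rightarrow> bool" where
  "is_top_face P i F \<longleftrightarrow> (\<exists>g \<in> hcells P i. F = iface P i g) \<and> (\<forall>a\<in>F. snd a = ZP)"

definition plane_edge :: "pt set \<Rightarrow> nat \<Rightarrow> cell \<Rightarrow> pt set" where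
  "plane_edge P i a = {p \<in> corners a. zc p = zlo P + int i}"

text \<open>i-beam(a): cells of the i-plane illuminated by rays from the i-plane edge e of a, in
  the horizontal direction orthogonal to a (pointing into the face cell f adjacent to e).\<close>
definition beam :: "pt set \<Rightarrow> nat \<Rightarrow> cell \<Rightarrow> cell set" where
  "beam P i a = {g \<in> hcells P i. \<exists>f \<in> hcells P i. plane_edge P i a \<in> cell_edges f \<and>
     (let u = (if fp (fst f) = fp (fst a) then hvec (opp (snd a)) else hvec (snd a)) in
       \<exists>k::nat. fp (fst g) = add2 (fp (fst f)) (scale2 (int k) u) \<and>
         (\<forall>j\<le>k. \<exists>h \<in> hcells P i. fp (fst h) = add2 (fp (fst f)) (scale2 (int j) u)))}"

text \<open>i-clip(r): the part of the i-face containing i-beam(r) that lies on the side of the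
  beam towards which the pointer points (from r), taken as the edge-connected component
  containing the beam.\<close>
definition clip :: "pt set \<Rightarrow> nat \<Rightarrow> pointer \<Rightarrow> cell \<Rightarrow> cell set" where
  "clip P i p r = (let B = beam P i r in
     if B = {} then {} else
     (let F = iface P i (SOME g. g \<in> B);
          t = hvec (tdir p (snd r));
          H = {g \<in> F. dot2 t (fp (fst g)) \<ge> dot2 t (fp (fst r))}
      in {g. \<exists>b \<in> B. (b, g) \<in> rtrancl (adj_in H)}))"

fun bnext :: "pt set \<Rightarrow> pointer \<Rightarrow> cell \<Rightarrow> cell" where
  "bnext P p (c, d) = (let t = tdir p d; c' = padd c (dvec t) in
     if padd c' (dvec d) \<in> P then (padd c' (dvec d), opp t)
     else if c' \<in> P then (c', d) else (c, t))"

definition band_seg :: "pt set \<Rightarrow> pointer \<Rightarrow> cell \<Rightarrow> cell \<Rightarrow> cell set" where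
  "band_seg P p a b = {(bnext P p ^^ k) a | k. k \<le> (LEAST n. (bnext P p ^^ n) a = b)}"

definition good_R :: "pt set \<Rightarrow> nat \<Rightarrow> pointer \<Rightarrow> cell \<Rightarrow> bool" where
  "good_R P i p r \<longleftrightarrow> clip P i p r = {} \<or>
     (\<exists>b \<in> band P (Suc i). parallel b r \<and> adj_to b (clip P i p r))"

definition selects_R :: "pt set \<Rightarrow> nat \<Rightarrow> cell \<Rightarrow> pointer \<Rightarrow> cell \<Rightarrow> bool" where
  "selects_R P i L p R \<longleftrightarrow> (\<exists>K < card (band P i). R = (bnext P p ^^ K) L \<and> good_R P i p R \<and>
     (\<forall>k. K < k \<and> k < card (band P i) \<longrightarrow> \<not> good_R P i p ((bnext P p ^^ k) L)))"

text \<open>Number of beams (parallel to beam(R)) delimited by beam(R) and beam(L), inclusive.\<close>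
definition nbeams :: "pointer \<Rightarrow> cell \<Rightarrow> cell \<Rightarrow> int" where
  "nbeams p R L = \<bar>dot2 (hvec (tdir p (snd R))) (add2 (fp (fst L)) (scale2 (-1) (fp (fst R))))\<bar> + 1"

text \<open>Manhattan distance between cell centres (coordinates doubled).\<close>
definition center2 :: "cell \<Rightarrow> pt" where
  "center2 a = padd (padd (padd (fst a) (fst a)) (1,1,1)) (dvec (snd a))"

definition mdist :: "cell \<Rightarrow> cell \<Rightarrow> int" where
  "mdist a b = l1 (center2 a) (center2 b)"

definition cand :: "pt set \<Rightarrow> nat \<Rightarrow> pointer \<Rightarrow> cell \<Rightarrow> cell \<Rightarrow> bool" where
  "cand P i p R L \<longleftrightarrow> L \<in> band P (Suc i) \<and> parallel L R \<and> adj_to L (clip P i p R)"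

text \<open>One recursive step (i \<ge> 2): given L_i and the i-pointer p, R_i is selected, and
  L_(i+1) and the (i+1)-pointer p' are determined.\<close>
definition step_ok :: "pt set \<Rightarrow> nat \<Rightarrow> cell \<Rightarrow> pointer \<Rightarrow> cell \<Rightarrow> cell \<Rightarrow> pointer \<Rightarrow> bool" where
  "step_ok P i L p R L' p' \<longleftrightarrow> selects_R P i L p R \<and>
     (if clip P i p R = {} then L' \<in> band P (Suc i) \<and> cell_adj R L' \<and> p' = p
      else cand P i p R L' \<and>
        (\<forall>M. cand P i p R M \<longrightarrow> nbeams p R L' < nbeams p R M \<or>
              (nbeams p R L' = nbeams p R M \<and> mdist R L' \<le> mdist R M)) \<and>
        p' = (if snd R = snd L' then p else flip p))"

text \<open>A complete run of the selection procedure: sequences L, R of cells and pointers p.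
  Initialization: a top 1-face F, a 1-band cell R_1 whose top edge e1 is on the boundary
  of F, and a parallel 2-band cell L_2 whose bottom edge e2 is on the boundary of F at the
  opposite end of the beam from e1 (both are anchors of the same nonempty beam).\<close>
definition selection_run :: "pt set \<Rightarrow> (nat \<Rightarrow> cell) \<Rightarrow> (nat \<Rightarrow> cell) \<Rightarrow> (nat \<Rightarrow> pointer) \<Rightarrow> bool" where
  "selection_run P L R p \<longleftrightarrow>
     p 1 = CCW \<and> p 2 = CCW \<and>
     (\<exists>F. is_top_face P 1 F \<and> R 1 \<in> band P 1 \<and> L 2 \<in> band P 2 \<and> parallel (R 1) (L 2) \<and>
        (\<exists>f \<in> F. plane_edge P 1 (R 1) \<in> cell_edges f) \<and>
        (\<exists>f \<in> F. plane_edge P 1 (L 2) \<in> cell_edges f) \<and>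
        beam P 1 (R 1) \<noteq> {} \<and> beam P 1 (R 1) = beam P 1 (L 2)) \<and>
     L 1 = bnext P CCW (R 1) \<and>
     (\<forall>j. 2 \<le> j \<and> j < num_m P \<longrightarrow> step_ok P j (L j) (p j) (R j) (L (Suc j)) (p (Suc j)))"

end

theory Submission
  imports Defs "HOL-Combinatorics.Orbits"
begin

(* Since the surface of the polycube is a sphere, invariance of domain forbids two cubes that
   meet only along an edge.  Hence a top cell of an i-plane is never edge-adjacent to a bottom
   cell, and the face of a top cell consists of top cells.

   Orthogonal convexity and connectedness make every layer a stack of intervals in which
   consecutive rows overlap, so the walk around a band is a single cycle through all its cells.
   The walk around the first band therefore visits every cell, and for i >= 2 an unvisited cell
   of the i-band comes after R_i, so by the choice of R_i its clip is nonempty and not adjacent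
   to a parallel (i+1)-band cell.

   A nonempty beam of a band cell r either starts on top of the cube of r and then stays on top
   of the layer, or starts below a cube of the next layer and then ends under a cell of the
   (i+1)-band parallel to r.  The beam lies in the clip, which excludes the second case, and
   the clip lies in the face of the beam, so it is on top as well. *)

section \<open>Cubes meeting along an edge\<close>

lemma dist_triple_le:
  fixes a b c x y z :: real
  shows "dist (a,b,c) (x,y,z) \<le> \<bar>a - x\<bar> + \<bar>b - y\<bar> + \<bar>c - z\<bar>"
proof -
  have "dist (a,b,c) (x,y,z) \<le> dist a x + dist (b,c) (y,z)"
    unfolding dist_Pair_Pair[of a "(b,c)"] by (rule sqrt_sum_squares_le_sum) auto
  also have "dist (b,c) (y,z) \<le> dist b y + dist c z"
    unfolding dist_Pair_Pair by (rule sqrt_sum_squares_le_sum) auto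
  finally show ?thesis by (simp add: dist_real_def)
qed

lemma int_eq_if_unit_intervals_meet:
  fixes t :: real
  assumes "of_int i \<le> t" "t \<le> of_int i + 1" "of_int n < t" "t < of_int n + 1"
  shows "i = n"
  using assms by (metis add.commute floor_eq2 floor_of_int le_floor_iff less_eq_real_def not_le
      of_int_1 of_int_add zle_add1_eq_le)

lemma closed_cube_pts: "closed (cube_pts q)"
proof (cases q)
  case (fields x y z)
  have "cube_pts (x,y,z) =
      {of_int x..of_int x + 1} \<times> {of_int y..of_int y + 1} \<times> {of_int z..of_int z + 1}"
    by auto
  then show ?thesis
    using fields by (simp only:) (intro closed_Times closed_atLeastAtMost)
qed

lemma closed_solid: "finite P \<Longrightarrow> closed (solid P)"
  unfolding solid_def by (intro closed_Union) (auto simp: closed_cube_pts)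

lemma mem_solid: "p \<in> solid P \<longleftrightarrow> (\<exists>q\<in>P. p \<in> cube_pts q)"
  unfolding solid_def by auto

lemma notin_solid_if_inside_missing_cube:
  fixes x y z :: real
  assumes "of_int i < x" "x < of_int i + 1" "of_int j < y" "y < of_int j + 1"
    "of_int k < z" "z < of_int k + 1" "(i,j,k) \<notin> P"
  shows "(x,y,z) \<notin> solid P"
proof
  assume "(x,y,z) \<in> solid P"
  then obtain a b c where "(a,b,c) \<in> P" "(x,y,z) \<in> cube_pts (a,b,c)"
    unfolding mem_solid by auto
  moreover from this have "a = i" "b = j" "c = k"
    using int_eq_if_unit_intervals_meet[of a x i] int_eq_if_unit_intervals_meet[of b y j]
      int_eq_if_unit_intervals_meet[of c z k] assms by auto
  ultimately show False using assms by simp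
qed

lemma frontier_solidI:
  assumes "finite P" "p \<in> solid P" and near: "\<And>e. e > 0 \<Longrightarrow> \<exists>q. dist q p < e \<and> q \<notin> solid P"
  shows "p \<in> frontier (solid P)"
proof -
  have "p \<notin> interior (solid P)"
  proof
    assume "p \<in> interior (solid P)"
    then obtain e where "e > 0" "ball p e \<subseteq> solid P" using mem_interior by blast
    with near[of e] show False by (metis mem_ball dist_commute subsetD)
  qed
  then show ?thesis
    using assms closed_solid by (simp add: frontier_def closure_closed)
qed

lemma openin_planar_subset_of_sphere:
  fixes S D A :: "'a::euclidean_space set"
  assumes "S homeomorphic sphere (0::'a) 1" and "D \<subseteq> S" and "y \<in> S - D"
    and "openin (top_of_set A) D" and "affine A" and "int DIM('a) - 1 \<le> aff_dim A"
  shows "openin (top_of_set S) D"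
proof -
  obtain h k where hk: "homeomorphism S (sphere (0::'a) 1) h k"
    using assms(1) unfolding homeomorphic_def by blast
  have "inj_on h S" using hk unfolding homeomorphism_def by (metis inj_on_inverseI)
  then have "h ` (S - {y}) = h ` S - h ` {y}"
    using assms(3) by (intro inj_on_image_set_diff) auto
  then have "h ` (S - {y}) = sphere 0 1 - {h y}"
    using hk unfolding homeomorphism_def by simp
  then have "homeomorphism (S - {y}) (sphere 0 1 - {h y}) h k"
    by (intro homeomorphism_of_subsets[OF hk]) auto
  moreover obtain c :: 'a where c: "c \<noteq> 0" using nonzero_Basis SOME_Basis by blast
  moreover have "h y \<in> sphere 0 1" using hk assms(3) unfolding homeomorphism_def by auto
  ultimately have "S - {y} homeomorphic {x. c \<bullet> x = 0}"
    using homeomorphic_punctured_sphere_hyperplane[of 1 "h y" 0 c 0]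
    by (meson homeomorphic_def homeomorphic_trans zero_less_one)
  then obtain g g' where gg: "homeomorphism (S - {y}) {x. c \<bullet> x = 0} g g'"
    unfolding homeomorphic_def by blast
  have D: "D \<subseteq> S - {y}" using assms(2,3) by blast
  have "openin (top_of_set {x. c \<bullet> x = 0}) (g ` D)"
  proof (rule invariance_of_domain_affine_sets[OF assms(4,5) affine_hyperplane])
    show "aff_dim {x. c \<bullet> x = 0} \<le> aff_dim A" using assms(6) c by simp
    show "continuous_on D g" "g \<in> D \<rightarrow> {x. c \<bullet> x = 0}" "inj_on g D"
      using gg D unfolding homeomorphism_def
      by (auto intro: continuous_on_subset inj_on_subset[OF inj_on_inverseI])
  qed
  then have "openin (top_of_set (S - {y})) (g' ` g ` D)"
    using homeomorphism_imp_open_map[OF homeomorphism_symD[OF gg]] by blast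
  moreover have "g' ` g ` D = D"
    using homeomorphism_apply1[OF gg] D by (force simp: image_image)
  ultimately have "openin (top_of_set (S - {y})) D" by simp
  moreover have "openin (top_of_set S) (S - {y})" by (intro openin_delete openin_subtopology_self)
  ultimately show ?thesis by (rule openin_trans)
qed

text \<open>Near the edge shared by the two cubes, the frontier contains a horizontal strip through
  the edge and the vertical wall below it.\<close>
lemma edge_pinch_frontier_points:
  fixes a1 a2 a3 :: int
  defines "ax \<equiv> (of_int a1 :: real)" and "ay \<equiv> (of_int a2 :: real)" and "az \<equiv> (of_int a3 :: real)"
  assumes fin: "finite P" and in1: "(a1,a2,a3) \<in> P" and in2: "(a1+1,a2,a3+1) \<in> P"
    and out1: "(a1+1,a2,a3) \<notin> P" and out2: "(a1,a2,a3+1) \<notin> P"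
  shows "\<And>x y. \<lbrakk>ax + 1/2 < x; x < ax + 3/2; ay < y; y < ay + 1\<rbrakk> \<Longrightarrow> (x,y,az+1) \<in> frontier (solid P)"
    and "\<And>s. \<lbrakk>0 < s; s < 1/2\<rbrakk> \<Longrightarrow> (ax+1, ay+1/2, az+1-s) \<in> frontier (solid P)"
proof -
  fix x y assume x: "ax + 1/2 < x" "x < ax + 3/2" and y: "ay < y" "y < ay + 1"
  show "(x,y,az+1) \<in> frontier (solid P)"
  proof (rule frontier_solidI[OF fin])
    show "(x,y,az+1) \<in> solid P"
      using x y in1 in2 unfolding mem_solid ax_def ay_def az_def
      by (cases "x \<le> ax + 1") (force simp: ax_def)+
    fix e :: real assume "e > 0"
    then obtain d where d: "0 < d" "d \<le> e/4" "d \<le> 1/8"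
      by (intro that[of "min (e/4) (1/8)"]) auto
    show "\<exists>q. dist q (x,y,az+1) < e \<and> q \<notin> solid P"
    proof (cases "x \<le> ax + 1")
      case True
      have "(x-d, y, az+1+d) \<notin> solid P"
        using True x y d out2 unfolding ax_def ay_def az_def
        by (intro notin_solid_if_inside_missing_cube[of a1 _ a2 _ "a3+1"]) auto
      moreover have "dist (x-d, y, az+1+d) (x,y,az+1) < e"
        using dist_triple_le[of "x-d" y "az+1+d" x y "az+1"] d by simp
      ultimately show ?thesis by blast
    next
      case False
      have "(x+d, y, az+1-d) \<notin> solid P"
        using False x y d out1 unfolding ax_def ay_def az_def
        by (intro notin_solid_if_inside_missing_cube[of "a1+1" _ a2 _ a3]) auto
      moreover have "dist (x+d, y, az+1-d) (x,y,az+1) < e"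
        using dist_triple_le[of "x+d" y "az+1-d" x y "az+1"] d by simp
      ultimately show ?thesis by blast
    qed
  qed
next
  fix s :: real assume s: "0 < s" "s < 1/2"
  show "(ax+1, ay+1/2, az+1-s) \<in> frontier (solid P)"
  proof (rule frontier_solidI[OF fin])
    show "(ax+1, ay+1/2, az+1-s) \<in> solid P"
      using s in1 unfolding mem_solid ax_def ay_def az_def by force
    fix e :: real assume "e > 0"
    then obtain d where d: "0 < d" "d \<le> e/4" "d \<le> 1/8"
      by (intro that[of "min (e/4) (1/8)"]) auto
    have "(ax+1+d, ay+1/2, az+1-s) \<notin> solid P"
      using s d out1 unfolding ax_def ay_def az_def
      by (intro notin_solid_if_inside_missing_cube[of "a1+1" _ a2 _ a3]) auto
    moreover have "dist (ax+1+d, ay+1/2, az+1-s) (ax+1, ay+1/2, az+1-s) < e"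
      using dist_triple_le[of "ax+1+d" "ay+1/2" "az+1-s" "ax+1" "ay+1/2" "az+1-s"] d by simp
    ultimately show "\<exists>q. dist q (ax+1, ay+1/2, az+1-s) < e \<and> q \<notin> solid P" by blast
  qed
qed

text \<open>The frontier would be a plane near the edge, yet it also contains the wall below the
  edge; invariance of domain rules this out for a topological sphere.\<close>
lemma polycube_no_edge_pinch:
  assumes pc: "polycube P" and "(a1,a2,a3) \<in> P" and "(a1+1,a2,a3+1) \<in> P"
    and "(a1+1,a2,a3) \<notin> P" and "(a1,a2,a3+1) \<notin> P"
  shows False
proof -
  define ax ay az where "ax = (of_int a1 :: real)" and "ay = (of_int a2 :: real)"
    and "az = (of_int a3 :: real)"
  define Fr where "Fr = frontier (solid P)"
  define D where "D = {p. snd (snd p) = az + 1 \<and> ax + 1/2 < fst p \<and> fst p < ax + 3/2 \<and>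
    ay < fst (snd p) \<and> fst (snd p) < ay + 1}"
  define Q where "Q s = (ax + 1, ay + 1/2, az + 1 - s)" for s
  have fin: "finite P" using pc by (simp add: polycube_def)
  note fr = edge_pinch_frontier_points[OF fin assms(2-5), folded ax_def ay_def az_def Fr_def]
  have DFr: "D \<subseteq> Fr"
  proof
    fix p assume "p \<in> D"
    then show "p \<in> Fr" using fr(1)[of "fst p" "fst (snd p)"] by (cases p) (auto simp: D_def)
  qed
  have QFr: "Q s \<in> Fr" if "0 < s" "s < 1/2" for s
    unfolding Q_def using fr(2) that by blast
  have QD: "Q s \<in> D \<longleftrightarrow> s = 0" for s by (auto simp: Q_def D_def)
  have sph: "Fr homeomorphic sphere (0::real\<times>real\<times>real) 1"
    using pc unfolding polycube_def Fr_def by blast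
  have plane: "openin (top_of_set {p. (0,0,1) \<bullet> p = az + 1}) D"
  proof -
    have "D = {p. (0,0,1) \<bullet> p = az + 1} \<inter>
        {p. ax + 1/2 < fst p \<and> fst p < ax + 3/2 \<and> ay < fst (snd p) \<and> fst (snd p) < ay + 1}"
      by (auto simp: D_def)
    moreover have "open {p::real\<times>real\<times>real. ax + 1/2 < fst p \<and> fst p < ax + 3/2 \<and>
        ay < fst (snd p) \<and> fst (snd p) < ay + 1}"
      by (intro open_Collect_conj open_Collect_less continuous_intros)
    ultimately show ?thesis by (simp add: openin_open_Int)
  qed
  have dim: "int DIM(real\<times>real\<times>real) - 1 \<le> aff_dim {p::real\<times>real\<times>real. (0,0,1) \<bullet> p = az + 1}"
    by (simp add: zero_prod_def)
  have "Q (1/4) \<in> Fr - D" using QFr[of "1/4"] QD[of "1/4"] by simp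
  then have "openin (top_of_set Fr) D"
    by (rule openin_planar_subset_of_sphere[OF sph DFr _ plane affine_hyperplane dim])
  then obtain e where e: "e > 0" "ball (Q 0) e \<inter> Fr \<subseteq> D"
    using QD[of 0] unfolding openin_contains_ball by blast
  define s where "s = min (e/2) (1/4)"
  have s: "0 < s" "s < e" "s < 1/2" using e by (auto simp: s_def)
  have "dist (Q 0) (Q s) < e"
    using dist_triple_le[of "ax + 1" "ay + 1/2" "az + 1" "ax + 1" "ay + 1/2" "az + 1 - s"] s
    by (simp add: Q_def)
  then have "Q s \<in> D" using e QFr[OF s(1,3)] by (auto simp: dist_commute)
  then show False using QD s by simp
qed

lemma polycube_image:
  fixes \<phi> :: "real\<times>real\<times>real \<Rightarrow> real\<times>real\<times>real"
  assumes pc: "polycube P" and lin: "linear \<phi>" and inj: "inj \<phi>"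
    and cubes: "\<And>q. \<phi> ` cube_pts q = cube_pts (\<sigma> q)"
  shows "polycube (\<sigma> ` P)"
proof -
  have "solid (\<sigma> ` P) = \<phi> ` solid P"
    unfolding solid_def by (auto simp: cubes[symmetric] image_UN)
  moreover have "frontier (\<phi> ` solid P) = \<phi> ` frontier (solid P)"
    unfolding frontier_def
    by (simp add: closure_injective_linear_image[OF lin inj, symmetric]
        interior_injective_linear_image[OF lin inj] image_set_diff[OF inj])
  moreover have "\<phi> ` frontier (solid P) homeomorphic frontier (solid P)"
    using linear_homeomorphic_image[OF lin inj] homeomorphic_sym by blast
  ultimately show ?thesis
    using pc unfolding polycube_def by (metis finite_imageI image_is_empty homeomorphic_trans)
qed

lemma mem_image_involution: "(\<And>x. f (f x) = x) \<Longrightarrow> p \<in> f ` A \<longleftrightarrow> f p \<in> A"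
  by (metis image_iff)

fun mirror_x :: "pt \<Rightarrow> pt" where "mirror_x (a,b,c) = (-a-1, b, c)"
fun swap_xy :: "pt \<Rightarrow> pt" where "swap_xy (a,b,c) = (b, a, c)"
fun swap_yz :: "pt \<Rightarrow> pt" where "swap_yz (a,b,c) = (a, c, b)"

lemma mem_mirror_x: "(a,b,c) \<in> mirror_x ` P \<longleftrightarrow> (-a-1,b,c) \<in> P"
  by (subst mem_image_involution) auto

lemma mem_swap_xy: "(a,b,c) \<in> swap_xy ` P \<longleftrightarrow> (b,a,c) \<in> P"
  by (subst mem_image_involution) auto

lemma mem_swap_yz: "(a,b,c) \<in> swap_yz ` P \<longleftrightarrow> (a,c,b) \<in> P"
  by (subst mem_image_involution) auto

lemma polycube_mirror_x: "polycube P \<Longrightarrow> polycube (mirror_x ` P)"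
proof (rule polycube_image[where \<phi> = "\<lambda>(x,y,z). (-x,y,z)"])
  show "linear (\<lambda>(x::real,y::real,z::real). (-x,y,z))" by (auto intro!: linearI)
  show "inj (\<lambda>(x::real,y::real,z::real). (-x,y,z))" by (auto intro!: injI)
  show "(\<lambda>(x,y,z). (-x,y,z)) ` cube_pts q = cube_pts (mirror_x q)" for q
    by (cases q, rule set_eqI, subst mem_image_involution) auto
qed

lemma polycube_swap_xy: "polycube P \<Longrightarrow> polycube (swap_xy ` P)"
proof (rule polycube_image[where \<phi> = "\<lambda>(x,y,z). (y,x,z)"])
  show "linear (\<lambda>(x::real,y::real,z::real). (y,x,z))" by (auto intro!: linearI)
  show "inj (\<lambda>(x::real,y::real,z::real). (y,x,z))" by (auto intro!: injI)
  show "(\<lambda>(x,y,z). (y,x,z)) ` cube_pts q = cube_pts (swap_xy q)" for q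
    by (cases q) (auto simp: image_iff)
qed

lemma polycube_swap_yz: "polycube P \<Longrightarrow> polycube (swap_yz ` P)"
proof (rule polycube_image[where \<phi> = "\<lambda>(x,y,z). (x,z,y)"])
  show "linear (\<lambda>(x::real,y::real,z::real). (x,z,y))" by (auto intro!: linearI)
  show "inj (\<lambda>(x::real,y::real,z::real). (x,z,y))" by (auto intro!: injI)
  show "(\<lambda>(x,y,z). (x,z,y)) ` cube_pts q = cube_pts (swap_yz q)" for q
    by (cases q) (auto simp: image_iff)
qed

lemma polycube_no_edge_pinch_above_x:
  assumes pc: "polycube P" and "(a,b,c) \<in> P" and "(a+s,b,c) \<notin> P" and "(a,b,c+1) \<notin> P"
    and s: "s = 1 \<or> s = -1"
  shows "(a+s,b,c+1) \<notin> P"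
  using s
proof
  assume "s = 1"
  then show ?thesis using polycube_no_edge_pinch[OF pc, of a b c] assms by auto
next
  assume "s = -1"
  then show ?thesis
    using polycube_no_edge_pinch[OF polycube_mirror_x[OF pc], of "-a-1" b c] assms
    by (auto simp: mem_mirror_x)
qed

lemma polycube_no_edge_pinch_above:
  assumes pc: "polycube P" and "a \<in> P" and "horiz d"
    and "padd a (dvec d) \<notin> P" and "padd a (0,0,1) \<notin> P"
  shows "padd (padd a (dvec d)) (0,0,1) \<notin> P"
proof -
  obtain x y z where a: "a = (x,y,z)" by (cases a)
  consider "d = XP" | "d = XN" | "d = YP" | "d = YN" using \<open>horiz d\<close> by (auto simp: horiz_def)
  then show ?thesis
  proof cases
    case 1 then show ?thesis using polycube_no_edge_pinch_above_x[OF pc, of x y z 1] assms a by simp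
  next
    case 2 then show ?thesis using polycube_no_edge_pinch_above_x[OF pc, of x y z "-1"] assms a
      by simp
  next
    case 3 then show ?thesis
      using polycube_no_edge_pinch_above_x[OF polycube_swap_xy[OF pc], of y x z 1] assms a
      by (simp add: mem_swap_xy)
  next
    case 4 then show ?thesis
      using polycube_no_edge_pinch_above_x[OF polycube_swap_xy[OF pc], of y x z "-1"] assms a
      by (simp add: mem_swap_xy)
  qed
qed

lemma polycube_diagonal_cubes:
  assumes pc: "polycube P" and "(x,y,z) \<in> P" and "(x+1,y+1,z) \<in> P"
  shows "(x+1,y,z) \<in> P \<or> (x,y+1,z) \<in> P"
  using polycube_no_edge_pinch[OF polycube_swap_yz[OF pc], of x z y] assms
  by (auto simp: mem_swap_yz)

lemma polycube_antidiagonal_cubes: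
  assumes pc: "polycube P" and "(x+1,y,z) \<in> P" and "(x,y+1,z) \<in> P"
  shows "(x,y,z) \<in> P \<or> (x+1,y+1,z) \<in> P"
  using polycube_diagonal_cubes[OF polycube_mirror_x[OF pc], of "-x-2" y z] assms
  by (auto simp: mem_mirror_x add.commute)

section \<open>Rows of a layer\<close>

lemma layer_solid_axis_segment:
  assumes oc: "ortho_convex_layers P" and i: "1 \<le> i" "i \<le> num_m P" and k: "k < 3"
    and a: "a \<in> layer_solid P i" and b: "a + s *\<^sub>R unit_axis k \<in> layer_solid P i"
  shows "closed_segment a (a + s *\<^sub>R unit_axis k) \<subseteq> layer_solid P i"
proof -
  have line: "a \<in> axis_line k a" "a + s *\<^sub>R unit_axis k \<in> axis_line k a"
    unfolding axis_line_def by (auto intro: exI[of _ 0])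
  have "layer_solid P i \<inter> axis_line k a = {} \<or>
      (\<exists>u v. layer_solid P i \<inter> axis_line k a = closed_segment u v)"
    using oc i k unfolding ortho_convex_layers_def by blast
  then obtain u v where "layer_solid P i \<inter> axis_line k a = closed_segment u v"
    using a line by blast
  then have "convex (layer_solid P i \<inter> axis_line k a)" by simp
  then show ?thesis using a b line by (intro closed_segment_subset[THEN order_trans]) auto
qed

fun cube_center :: "pt \<Rightarrow> real \<times> real \<times> real" where
  "cube_center (x,y,z) = (of_int x + 1/2, of_int y + 1/2, of_int z + 1/2)"

lemma cube_center_mem_cube_pts: "cube_center c \<in> cube_pts c"
  by (cases c) simp

lemma cube_center_in_layer_solid_iff:
  "cube_center (x,y,lvl P i) \<in> layer_solid P i \<longleftrightarrow> (x,y,lvl P i) \<in> P"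
proof
  assume "cube_center (x,y,lvl P i) \<in> layer_solid P i"
  then obtain a b where "(a,b,lvl P i) \<in> P" "cube_center (x,y,lvl P i) \<in> cube_pts (a,b,lvl P i)"
    unfolding layer_solid_def by auto
  moreover from this have "a = x" "b = y"
    using int_eq_if_unit_intervals_meet[of a "of_int x + 1/2" x]
      int_eq_if_unit_intervals_meet[of b "of_int y + 1/2" y] by auto
  ultimately show "(x,y,lvl P i) \<in> P" by simp
next
  assume "(x,y,lvl P i) \<in> P"
  then have "cube_pts (x,y,lvl P i) \<in> cube_pts ` {c \<in> P. zc c = lvl P i}" by (intro imageI) simp
  then show "cube_center (x,y,lvl P i) \<in> layer_solid P i"
    unfolding layer_solid_def by (rule UnionI) simp
qed

lemma layer_cube_between:
  assumes oc: "ortho_convex_layers P" and i: "1 \<le> i" "i \<le> num_m P"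
    and d: "horiz d" "hvec d = (dx,dy)"
    and c1: "(x,y,lvl P i) \<in> P" and c2: "(x + n*dx, y + n*dy, lvl P i) \<in> P"
    and j: "0 \<le> j" "j \<le> n"
  shows "(x + j*dx, y + j*dy, lvl P i) \<in> P"
proof (cases "n = 0")
  case True then show ?thesis using c1 j by simp
next
  case False
  define a where "a = cube_center (x,y,lvl P i)"
  define v where "v = (of_int dx :: real, of_int dy :: real, 0 :: real)"
  have "v = unit_axis 0 \<or> v = - unit_axis 0 \<or> v = unit_axis 1 \<or> v = - unit_axis 1"
    using d by (cases d) (auto simp: horiz_def v_def)
  then obtain k t where k: "k < 3" and v: "v = t *\<^sub>R unit_axis k"
    by (metis scaleR_minus1_left scaleR_one less_numeral_extra(4) not_less_iff_gr_or_eq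
        one_less_numeral_iff semiring_norm(77) zero_less_numeral)
  have center: "cube_center (x + m*dx, y + m*dy, lvl P i) = a + of_int m *\<^sub>R v" for m
    by (simp add: a_def v_def algebra_simps)
  have near: "a \<in> layer_solid P i"
    unfolding a_def using c1 cube_center_in_layer_solid_iff by blast
  have "a + of_int n *\<^sub>R v \<in> layer_solid P i"
    using c2 center[of n] cube_center_in_layer_solid_iff by metis
  then have seg: "closed_segment a (a + of_int n *\<^sub>R v) \<subseteq> layer_solid P i"
    using layer_solid_axis_segment[OF oc i k near, of "of_int n * t"] v by simp
  define u where "u = (of_int j / of_int n :: real)"
  have u: "0 \<le> u" "u \<le> 1" using j by (auto simp: u_def divide_simps)
  have "a + of_int j *\<^sub>R v = (1 - u) *\<^sub>R a + u *\<^sub>R (a + of_int n *\<^sub>R v)"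
    using False by (simp add: u_def algebra_simps)
  then have "a + of_int j *\<^sub>R v \<in> closed_segment a (a + of_int n *\<^sub>R v)"
    using u unfolding in_segment by blast
  then show ?thesis using seg center[of j] cube_center_in_layer_solid_iff by (metis subsetD)
qed

lemma cubes_meeting_across_row:
  assumes pc: "polycube P" and c: "(a,b,z) \<in> P" and c': "(a',b',z) \<in> P"
    and "b \<le> y" and "y + 1 \<le> b'" and "p \<in> cube_pts (a,b,z)" and "p \<in> cube_pts (a',b',z)"
  shows "\<exists>x. (x,y,z) \<in> P \<and> (x,y+1,z) \<in> P"
proof -
  obtain px py pz where p: "p = (px,py,pz)" by (cases p)
  have "of_int b' \<le> py" "py \<le> of_int b + 1" "of_int a \<le> px" "px \<le> of_int a + 1"
    "of_int a' \<le> px" "px \<le> of_int a' + 1"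
    using assms(6,7) p by auto
  then have "b' \<le> b + 1" "a' \<le> a + 1" "a \<le> a' + 1" by linarith+
  then have "b = y" "b' = y + 1" and "a' = a \<or> a' = a + 1 \<or> a' + 1 = a" using assms(4,5) by auto
  then show ?thesis
    using c c' polycube_diagonal_cubes[OF pc, of a y z]
      polycube_antidiagonal_cubes[OF pc, of a' y z]
    by auto
qed

text \<open>The cubes of the rows up to \<open>y\<close> and those of the rows from \<open>y + 1\<close> on form two
  closed pieces of the layer, which must touch since the layer is connected.\<close>
lemma layer_rows_linked:
  assumes pc: "polycube P" and cl: "connected_layers P" and i: "1 \<le> i" "i \<le> num_m P"
    and c1: "(x1,y1,lvl P i) \<in> P" and c2: "(x2,y2,lvl P i) \<in> P" and y: "y1 \<le> y" "y < y2"
  shows "\<exists>x. (x,y,lvl P i) \<in> P \<and> (x,y+1,lvl P i) \<in> P"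
proof -
  define z where "z = lvl P i"
  define A where "A = solid {c \<in> P. zc c = z \<and> fst (snd c) \<le> y}"
  define B where "B = solid {c \<in> P. zc c = z \<and> y + 1 \<le> fst (snd c)}"
  have fin: "finite P" using pc by (simp add: polycube_def)
  have "closed A" "closed B" unfolding A_def B_def using fin by (auto intro: closed_solid)
  moreover have "layer_solid P i \<subseteq> A \<union> B"
  proof
    fix p assume "p \<in> layer_solid P i"
    then obtain c where "c \<in> P" "zc c = z" "p \<in> cube_pts c" by (auto simp: layer_solid_def z_def)
    moreover have "fst (snd c) \<le> y \<or> y + 1 \<le> fst (snd c)" by auto
    ultimately show "p \<in> A \<union> B" unfolding A_def B_def Un_iff mem_solid by blast
  qed
  moreover have "(x1,y1,z) \<in> {c \<in> P. zc c = z \<and> fst (snd c) \<le> y}"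
    and "(x2,y2,z) \<in> {c \<in> P. zc c = z \<and> y + 1 \<le> fst (snd c)}"
    using c1 c2 y by (auto simp: z_def)
  then have "cube_center (x1,y1,z) \<in> A \<inter> layer_solid P i"
    and "cube_center (x2,y2,z) \<in> B \<inter> layer_solid P i"
    unfolding A_def B_def mem_solid Int_iff z_def
    using c1 c2 cube_center_in_layer_solid_iff cube_center_mem_cube_pts by (meson bexI)+
  moreover have "connected (layer_solid P i)" using cl i unfolding connected_layers_def by blast
  ultimately have "A \<inter> B \<noteq> {}" unfolding connected_closed by blast
  then obtain p where "p \<in> A" "p \<in> B" by blast
  then obtain c c' where "c \<in> P" "zc c = z" "fst (snd c) \<le> y" "p \<in> cube_pts c"
    and "c' \<in> P" "zc c' = z" "y + 1 \<le> fst (snd c')" "p \<in> cube_pts c'"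
    unfolding A_def B_def mem_solid by blast
  moreover obtain a b a' b' where "c = (a,b,z)" "c' = (a',b',z)"
    using calculation by (metis prod.collapse zc.simps)
  ultimately show ?thesis using cubes_meeting_across_row[OF pc, of a b z a' b' y p]
    by (simp add: z_def)
qed

section \<open>The walk around a band\<close>

lemma self_in_orbit_if_bij_betw:
  assumes fin: "finite S" and bij: "bij_betw f S S" and x: "x \<in> S"
  shows "x \<in> orbit f x"
proof -
  have iter: "(f ^^ n) x \<in> S" for n using bij_betw_funpow[OF bij] x by (meson bij_betwE)
  have "\<not> inj_on (\<lambda>n. (f ^^ n) x) {0..card S}"
  proof
    assume "inj_on (\<lambda>n. (f ^^ n) x) {0..card S}"
    then have "card {0..card S} \<le> card S" using iter fin by (intro card_inj_on_le) auto
    then show False by simp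
  qed
  then obtain m n where mn: "m < n" "(f ^^ m) x = (f ^^ n) x"
    unfolding inj_on_def by (metis linorder_neqE_nat)
  moreover have "(f ^^ m) ((f ^^ (n - m)) x) = (f ^^ n) x"
    using mn(1) by (metis funpow_add le_add_diff_inverse less_imp_le o_apply)
  ultimately have "(f ^^ m) x = (f ^^ m) ((f ^^ (n - m)) x)" by simp
  then have "x = (f ^^ (n - m)) x"
    by (rule inj_onD[OF bij_betw_imp_inj_on[OF bij_betw_funpow[OF bij]]]) (use x iter in auto)
  then show ?thesis unfolding orbit_altdef using mn(1) by force
qed

lemma orbit_eq_if_all_reach:
  assumes fin: "finite S" and bij: "bij_betw f S S" and x: "x \<in> S"
    and reach: "\<And>y. y \<in> S \<Longrightarrow> \<exists>n. (f ^^ n) y = t"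
  shows "orbit f x = S"
proof
  have "y \<in> S" if "y \<in> orbit f x" for y
    using that x bij by induction (auto dest: bij_betwE)
  then show "orbit f x \<subseteq> S" by blast
  have t_in_orbit: "t \<in> orbit f y" if "y \<in> S" for y
    using reach[OF that] funpow_in_orbit[OF self_in_orbit_if_bij_betw[OF fin bij that]] by blast
  show "S \<subseteq> orbit f x"
  proof
    fix y assume "y \<in> S"
    then have "y \<in> orbit f t"
      using orbit_swap[OF self_in_orbit_if_bij_betw[OF fin bij] t_in_orbit] \<open>y \<in> S\<close> by blast
    then show "y \<in> orbit f x" using t_in_orbit[OF x] by (rule orbit_trans)
  qed
qed

lemma funpow_enumerates_orbit:
  assumes orb: "orbit f x = S" and x: "x \<in> S"
  shows "bij_betw (\<lambda>n. (f ^^ n) x) {..<card S} S" and "(f ^^ card S) x = x"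
proof -
  have self: "x \<in> orbit f x" using orb x by simp
  have bij: "bij_betw (\<lambda>n. (f ^^ n) x) {..<funpow_dist1 f x x} S"
    using inj_on_funpow_dist1[OF self] orbit_conv_funpow_dist1[OF self] orb
    by (simp add: bij_betw_def atLeast0LessThan)
  then have "card S = funpow_dist1 f x x" by (metis bij_betw_same_card card_lessThan)
  then show "bij_betw (\<lambda>n. (f ^^ n) x) {..<card S} S" "(f ^^ card S) x = x"
    using bij funpow_dist1_prop[OF self] by simp_all
qed

lemma funpow_left_inverse:
  assumes "\<And>y. y \<in> S \<Longrightarrow> f y \<in> S" and "\<And>y. y \<in> S \<Longrightarrow> g (f y) = y" and "x \<in> S"
  shows "(g ^^ n) ((f ^^ n) x) = x"
  using assms(3)
proof (induction n arbitrary: x)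
  case (Suc n)
  have "(f ^^ Suc n) x = (f ^^ n) (f x)" by (simp add: funpow_Suc_right del: funpow.simps)
  then show ?case using Suc.IH[of "f x"] Suc.prems assms(1,2) by simp
qed simp

lemma funpow_dist_funpow:
  assumes "inj_on (\<lambda>k. (f ^^ k) a) {..<N}" and "K < N"
  shows "funpow_dist f a ((f ^^ K) a) = K"
  unfolding funpow_dist_def
proof (rule Least_equality)
  show "K \<le> n" if "(f ^^ n) a = (f ^^ K) a" for n
    using inj_onD[OF assms(1) that] assms(2) by (cases "n < K") auto
qed simp

lemma mem_band_iff:
  "((x,y,z),d) \<in> band P i \<longleftrightarrow> (x,y,z) \<in> P \<and> horiz d \<and> z = lvl P i \<and> padd (x,y,z) (dvec d) \<notin> P"
  by (auto simp: band_def surface_cell_def)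

lemma bnext_in_band: "r \<in> band P i \<Longrightarrow> bnext P q r \<in> band P i"
  by (cases r, cases q; cases "snd r") (auto simp: Let_def mem_band_iff horiz_def)

lemma bnext_flip_bnext: "r \<in> band P i \<Longrightarrow> bnext P (flip q) (bnext P q r) = r"
  by (cases r, cases q; cases "snd r") (auto simp: Let_def mem_band_iff horiz_def)

lemma finite_band: "finite P \<Longrightarrow> finite (band P i)"
  by (rule finite_subset[of _ "P \<times> {XP,XN,YP,YN}"]) (auto simp: band_def surface_cell_def horiz_def)

lemma flip_flip [simp]: "flip (flip q) = q"
  by (cases q) auto

lemma bij_betw_bnext_band: "bij_betw (bnext P q) (band P i) (band P i)"
  using bnext_in_band[of _ P i] bnext_flip_bnext[of _ P i q] bnext_flip_bnext[of _ P i "flip q"]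
  by (intro bij_betw_byWitness[where f' = "bnext P (flip q)"]) (auto simp del: bnext.simps)

locale row_convex_level =
  fixes P :: "pt set" and z0 :: int
  assumes finite_cubes: "finite P"
    and row_convex: "\<And>x1 x2 x y. (x1,y,z0) \<in> P \<Longrightarrow> (x2,y,z0) \<in> P \<Longrightarrow> x1 \<le> x \<Longrightarrow> x \<le> x2 \<Longrightarrow>
      (x,y,z0) \<in> P"
    and rows_linked: "\<And>x1 y1 x2 y2 y. (x1,y1,z0) \<in> P \<Longrightarrow> (x2,y2,z0) \<in> P \<Longrightarrow> y1 \<le> y \<Longrightarrow> y < y2 \<Longrightarrow>
      \<exists>x. (x,y,z0) \<in> P \<and> (x,y+1,z0) \<in> P"
    and level_nonempty: "\<exists>x y. (x,y,z0) \<in> P"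
begin

definition row :: "int \<Rightarrow> int set" where "row y = {x. (x,y,z0) \<in> P}"
definition rows :: "int set" where "rows = {y. \<exists>x. (x,y,z0) \<in> P}"
definition y_min :: int where "y_min = Min rows"
definition y_max :: int where "y_max = Max rows"
definition row_min :: "int \<Rightarrow> int" where "row_min y = Min (row y)"
definition row_max :: "int \<Rightarrow> int" where "row_max y = Max (row y)"

lemma finite_row: "finite (row y)"
  by (rule finite_subset[of _ "fst ` P"])
    (auto simp: row_def finite_cubes intro: image_eqI[where x = "(_,y,z0)"])

lemma finite_rows: "finite rows"
  by (rule finite_subset[of _ "(\<lambda>c. fst (snd c)) ` P"])
    (auto simp: rows_def finite_cubes intro: image_eqI[where x = "(_,_,z0)"])

lemma cube_bounds:
  assumes "(x,y,z0) \<in> P"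
  shows "y_min \<le> y \<and> y \<le> y_max \<and> row_min y \<le> x \<and> x \<le> row_max y"
proof -
  have "y \<in> rows" "x \<in> row y" using assms by (auto simp: rows_def row_def)
  then show ?thesis
    using finite_rows finite_row Min_le Max_ge
    by (auto simp: y_min_def y_max_def row_min_def row_max_def)
qed

lemma extreme_rows_nonempty: "\<exists>x. (x,y_min,z0) \<in> P" "\<exists>x. (x,y_max,z0) \<in> P"
proof -
  have "rows \<noteq> {}" using level_nonempty by (auto simp: rows_def)
  then have "y_min \<in> rows" "y_max \<in> rows"
    using finite_rows by (auto simp: y_min_def y_max_def)
  then show "\<exists>x. (x,y_min,z0) \<in> P" "\<exists>x. (x,y_max,z0) \<in> P" by (auto simp: rows_def)
qed

lemma consecutive_rows_common_cube:
  assumes "y_min \<le> y" "y < y_max"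
  obtains x where "(x,y,z0) \<in> P" "(x,y+1,z0) \<in> P"
  using extreme_rows_nonempty rows_linked assms by blast

lemma row_nonempty: "y_min \<le> y \<Longrightarrow> y \<le> y_max \<Longrightarrow> \<exists>x. (x,y,z0) \<in> P"
  using extreme_rows_nonempty(2) consecutive_rows_common_cube[of y] by (cases "y = y_max") auto

lemma mem_level_iff:
  assumes "y_min \<le> y" "y \<le> y_max"
  shows "(x,y,z0) \<in> P \<longleftrightarrow> row_min y \<le> x \<and> x \<le> row_max y"
proof -
  have "row y \<noteq> {}" using row_nonempty[OF assms] by (auto simp: row_def)
  then have "row_min y \<in> row y" "row_max y \<in> row y"
    unfolding row_min_def row_max_def using finite_row by (blast intro: Min_in Max_in)+
  then have "(row_min y,y,z0) \<in> P" "(row_max y,y,z0) \<in> P" by (auto simp: row_def)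
  then show ?thesis using cube_bounds row_convex by blast
qed

lemma notin_level_outside_rows: "y < y_min \<or> y_max < y \<Longrightarrow> (x,y,z0) \<notin> P"
  using cube_bounds by fastforce

lemma row_min_le_row_max: "y_min \<le> y \<Longrightarrow> y \<le> y_max \<Longrightarrow> row_min y \<le> row_max y"
  using row_nonempty cube_bounds by fastforce

lemma consecutive_rows_overlap:
  assumes "y_min \<le> y" "y < y_max"
  shows "row_min y \<le> row_max (y+1)" "row_min (y+1) \<le> row_max y"
  using consecutive_rows_common_cube[OF assms] cube_bounds by (metis order_trans)+

end

fun lex4_less :: "int \<times> int \<times> int \<times> int \<Rightarrow> int \<times> int \<times> int \<times> int \<Rightarrow> bool" where
  "lex4_less (a1,b1,c1,d1) (a2,b2,c2,d2) \<longleftrightarrow>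
     a1 < a2 \<or> (a1 = a2 \<and> (b1 < b2 \<or> (b1 = b2 \<and> (c1 < c2 \<or> (c1 = c2 \<and> d1 < d2)))))"

lemma lex4_less_trans: "lex4_less u v \<Longrightarrow> lex4_less v w \<Longrightarrow> lex4_less u w"
  by (cases u; cases v; cases w) auto

lemma lex4_less_irrefl: "\<not> lex4_less u u"
  by (cases u) auto

lemma bnext_ccw_YN: "bnext P CCW ((x,y,z),YN) = (if (x+1,y-1,z) \<in> P then ((x+1,y-1,z),XN)
    else if (x+1,y,z) \<in> P then ((x+1,y,z),YN) else ((x,y,z),XP))"
  by (simp add: Let_def)

lemma bnext_ccw_XP: "bnext P CCW ((x,y,z),XP) = (if (x+1,y+1,z) \<in> P then ((x+1,y+1,z),YN)
    else if (x,y+1,z) \<in> P then ((x,y+1,z),XP) else ((x,y,z),YP))"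
  by (simp add: Let_def)

lemma bnext_ccw_YP: "bnext P CCW ((x,y,z),YP) = (if (x-1,y+1,z) \<in> P then ((x-1,y+1,z),XP)
    else if (x-1,y,z) \<in> P then ((x-1,y,z),YP) else ((x,y,z),XN))"
  by (simp add: Let_def)

lemma bnext_ccw_XN: "bnext P CCW ((x,y,z),XN) = (if (x-1,y-1,z) \<in> P then ((x-1,y-1,z),YP)
    else if (x,y-1,z) \<in> P then ((x,y-1,z),XN) else ((x,y,z),YN))"
  by (simp add: Let_def)

context row_convex_level
begin

text \<open>Position of a band cell along the counterclockwise walk that starts at the bottom side of
  the leftmost cube of the lowest row: the bottom sides of the lowest row, then the right boundary
  row by row upwards, the top sides of the highest row, and the left boundary downwards, ending
  at \<open>walk_end\<close>, the left side of the starting cube.\<close>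
fun walk_key :: "cell \<Rightarrow> int \<times> int \<times> int \<times> int" where
  "walk_key ((x,y,z),YN) = (if y = y_min then (0,0,0,x)
     else if row_max (y-1) < x then (1,y,0,x) else (3,-y,2,x))"
| "walk_key ((x,y,z),XP) = (1,y,1,0)"
| "walk_key ((x,y,z),YP) = (if y = y_max then (2,0,0,-x)
     else if row_max (y+1) < x then (1,y,2,-x) else (3,-y,0,-x))"
| "walk_key ((x,y,z),XN) = (3,-y,1,0)"
| "walk_key (_,ZP) = (0,0,0,0)"
| "walk_key (_,ZN) = (0,0,0,0)"

lemma walk_key_step_YN:
  assumes c: "(x,y,z0) \<in> P" "(x,y-1,z0) \<notin> P"
  shows "lex4_less (walk_key ((x,y,z0),YN)) (walk_key (bnext P CCW ((x,y,z0),YN)))"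
proof (cases "y = y_min")
  case True
  then have "(x+1,y-1,z0) \<notin> P" by (intro notin_level_outside_rows) simp
  then show ?thesis using True unfolding bnext_ccw_YN by simp
next
  case False
  have y: "y_min \<le> y - 1" "y - 1 < y_max" "y_min \<le> y" "y \<le> y_max" using cube_bounds[OF c(1)] False
    by auto
  show ?thesis
    using c cube_bounds[OF c(1)] consecutive_rows_overlap[OF y(1,2)] row_min_le_row_max[OF y(1)] y
    unfolding bnext_ccw_YN by (auto simp: mem_level_iff[OF y(1)] mem_level_iff[OF y(3,4)])
qed

lemma walk_key_step_XP:
  assumes c: "(x,y,z0) \<in> P" "(x+1,y,z0) \<notin> P"
  shows "lex4_less (walk_key ((x,y,z0),XP)) (walk_key (bnext P CCW ((x,y,z0),XP)))"
proof (cases "y = y_max")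
  case True
  then have "(x+1,y+1,z0) \<notin> P" "(x,y+1,z0) \<notin> P" using notin_level_outside_rows[of "y+1"] by auto
  then show ?thesis using True unfolding bnext_ccw_XP by simp
next
  case False
  have y: "y_min \<le> y" "y < y_max" "y_min \<le> y + 1" "y + 1 \<le> y_max" using cube_bounds[OF c(1)] False
    by auto
  show ?thesis
    using c cube_bounds[OF c(1)] consecutive_rows_overlap[OF y(1,2)] y
    unfolding bnext_ccw_XP by (auto simp: mem_level_iff[OF y(1)] mem_level_iff[OF y(3,4)])
qed

lemma walk_key_step_YP:
  assumes c: "(x,y,z0) \<in> P" "(x,y+1,z0) \<notin> P"
  shows "lex4_less (walk_key ((x,y,z0),YP)) (walk_key (bnext P CCW ((x,y,z0),YP)))"
proof (cases "y = y_max")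
  case True
  then have "(x-1,y+1,z0) \<notin> P" by (intro notin_level_outside_rows) simp
  then show ?thesis using True unfolding bnext_ccw_YP by simp
next
  case False
  have y: "y_min \<le> y" "y < y_max" "y_min \<le> y + 1" "y + 1 \<le> y_max" using cube_bounds[OF c(1)] False
    by auto
  show ?thesis
    using c cube_bounds[OF c(1)] consecutive_rows_overlap[OF y(1,2)] row_min_le_row_max[OF y(3,4)] y
    unfolding bnext_ccw_YP by (auto simp: mem_level_iff[OF y(1)] mem_level_iff[OF y(3,4)])
qed

lemma walk_key_step_XN:
  assumes c: "(x,y,z0) \<in> P" "(x-1,y,z0) \<notin> P" and "y \<noteq> y_min"
  shows "lex4_less (walk_key ((x,y,z0),XN)) (walk_key (bnext P CCW ((x,y,z0),XN)))"
proof -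
  have y: "y_min \<le> y - 1" "y - 1 < y_max" "y_min \<le> y" "y \<le> y_max"
    using cube_bounds[OF c(1)] assms(3) by auto
  show ?thesis
    using c cube_bounds[OF c(1)] consecutive_rows_overlap[OF y(1,2)] y
    unfolding bnext_ccw_XN by (auto simp: mem_level_iff[OF y(1)] mem_level_iff[OF y(3,4)])
qed

definition walk_end :: cell where "walk_end = ((row_min y_min, y_min, z0), XN)"

lemma walk_key_step:
  assumes c: "c \<in> band P i" and z0: "z0 = lvl P i" and "c \<noteq> walk_end"
  shows "lex4_less (walk_key c) (walk_key (bnext P CCW c))"
proof -
  obtain x y d where cd: "c = ((x,y,z0),d)" "(x,y,z0) \<in> P" "horiz d" "padd (x,y,z0) (dvec d) \<notin> P"
    using c z0 by (cases c) (auto simp: mem_band_iff)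
  have ny: "y \<noteq> y_min" if "d = XN"
  proof
    assume "y = y_min"
    then have "x = row_min y"
      using cd that mem_level_iff[of y x] mem_level_iff[of y "x-1"] cube_bounds[of x y] by auto
    then show False using \<open>y = y_min\<close> cd that assms(3) by (simp add: walk_end_def)
  qed
  consider "d = YN" | "d = XP" | "d = YP" | "d = XN"
    using cd(3) by (cases d) (auto simp: horiz_def)
  then show ?thesis
  proof cases
    case 1 then show ?thesis using cd walk_key_step_YN[of x y] by (simp del: bnext.simps)
  next
    case 2 then show ?thesis using cd walk_key_step_XP[of x y] by (simp del: bnext.simps)
  next
    case 3 then show ?thesis using cd walk_key_step_YP[of x y] by (simp del: bnext.simps)
  next
    case 4 then show ?thesis using cd ny walk_key_step_XN[of x y] by (simp del: bnext.simps)
  qed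
qed

lemma walk_end_in_band: "z0 = lvl P i \<Longrightarrow> walk_end \<in> band P i"
proof -
  assume z0: "z0 = lvl P i"
  have y: "y_min \<le> y_min" "y_min \<le> y_max" using extreme_rows_nonempty(1) cube_bounds by blast+
  then have "(row_min y_min, y_min, z0) \<in> P" "(row_min y_min - 1, y_min, z0) \<notin> P"
    using mem_level_iff[OF y] row_min_le_row_max[OF y] by auto
  then show ?thesis by (simp add: walk_end_def mem_band_iff horiz_def z0[symmetric])
qed

lemma reaches_walk_end:
  assumes "z0 = lvl P i" and "c \<in> band P i"
  shows "\<exists>k. (bnext P CCW ^^ k) c = walk_end"
  using assms(2)
proof (induction "card {c' \<in> band P i. lex4_less (walk_key c) (walk_key c')}" arbitrary: c
    rule: less_induct)
  case less
  show ?case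
  proof (cases "c = walk_end")
    case True then show ?thesis by (intro exI[of _ 0]) simp
  next
    case False
    define c' where "c' = bnext P CCW c"
    have c': "c' \<in> band P i" "lex4_less (walk_key c) (walk_key c')"
      unfolding c'_def using bnext_in_band less.prems walk_key_step[OF less.prems assms(1) False]
      by auto
    have "{c'' \<in> band P i. lex4_less (walk_key c') (walk_key c'')}
        \<subset> {c'' \<in> band P i. lex4_less (walk_key c) (walk_key c'')}"
    proof
      show "{c'' \<in> band P i. lex4_less (walk_key c') (walk_key c'')}
          \<subseteq> {c'' \<in> band P i. lex4_less (walk_key c) (walk_key c'')}"
        using c'(2) lex4_less_trans by blast
      have "c' \<notin> {c'' \<in> band P i. lex4_less (walk_key c') (walk_key c'')}"
        using lex4_less_irrefl by simp
      then show "{c'' \<in> band P i. lex4_less (walk_key c') (walk_key c'')}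
          \<noteq> {c'' \<in> band P i. lex4_less (walk_key c) (walk_key c'')}"
        using c' by blast
    qed
    then have "card {c'' \<in> band P i. lex4_less (walk_key c') (walk_key c'')}
        < card {c'' \<in> band P i. lex4_less (walk_key c) (walk_key c'')}"
      using finite_band[OF finite_cubes] by (intro psubset_card_mono) auto
    then obtain k where "(bnext P CCW ^^ k) c' = walk_end" using less.hyps c'(1) by blast
    then have "(bnext P CCW ^^ Suc k) c = walk_end"
      by (simp add: c'_def funpow_Suc_right del: funpow.simps)
    then show ?thesis by blast
  qed
qed

end

lemma row_convex_level_of_layer:
  assumes pc: "polycube P" and oc: "ortho_convex_layers P" and cl: "connected_layers P"
    and i: "1 \<le> i" "i \<le> num_m P" and c: "c \<in> band P i"
  shows "row_convex_level P (lvl P i)"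
proof
  show "finite P" using pc by (simp add: polycube_def)
  show "(x,y,lvl P i) \<in> P" if "(x1,y,lvl P i) \<in> P" "(x2,y,lvl P i) \<in> P" "x1 \<le> x" "x \<le> x2"
    for x1 x2 x y
    using layer_cube_between[OF oc i, of XP 1 0 x1 y "x2 - x1" "x - x1"] that
    by (simp add: horiz_def)
  show "\<exists>x. (x,y,lvl P i) \<in> P \<and> (x,y+1,lvl P i) \<in> P"
    if "(x1,y1,lvl P i) \<in> P" "(x2,y2,lvl P i) \<in> P" "y1 \<le> y" "y < y2" for x1 y1 x2 y2 y
    using layer_rows_linked[OF pc cl i that] .
  show "\<exists>x y. (x,y,lvl P i) \<in> P" using c by (cases c) (force simp: mem_band_iff)
qed

lemma orbit_bnext_eq_band:
  assumes pc: "polycube P" and oc: "ortho_convex_layers P" and cl: "connected_layers P"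
    and i: "1 \<le> i" "i \<le> num_m P" and a: "a \<in> band P i"
  shows "orbit (bnext P q) a = band P i"
proof -
  interpret row_convex_level P "lvl P i" by (rule row_convex_level_of_layer[OF assms])
  have fin: "finite (band P i)" using finite_band[OF finite_cubes] .
  have ccw: "orbit (bnext P CCW) b = band P i" if "b \<in> band P i" for b
    using orbit_eq_if_all_reach[OF fin bij_betw_bnext_band that reaches_walk_end] by simp
  show ?thesis
  proof (cases q)
    case CCW then show ?thesis using ccw[OF a] by simp
  next
    case CW
    have "\<exists>n. (bnext P CW ^^ n) y = walk_end" if y: "y \<in> band P i" for y
    proof -
      have "walk_end \<in> orbit (bnext P CCW) walk_end" using ccw walk_end_in_band[OF refl] by simp
      then have "band P i = {(bnext P CCW ^^ n) walk_end | n. True}"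
        using ccw[OF walk_end_in_band[OF refl]] orbit_altdef_self_in by metis
      then obtain n where "y = (bnext P CCW ^^ n) walk_end" using y by blast
      then have "(bnext P (flip CCW) ^^ n) y = walk_end"
        using funpow_left_inverse[of "band P i" "bnext P CCW" "bnext P (flip CCW)",
            OF bnext_in_band bnext_flip_bnext walk_end_in_band[OF refl]]
        by simp
      then show ?thesis by auto
    qed
    then show ?thesis using orbit_eq_if_all_reach[OF fin bij_betw_bnext_band a] CW by blast
  qed
qed

lemma band_seg_eq_funpow_image:
  "band_seg P q a b = (\<lambda>k. (bnext P q ^^ k) a) ` {..funpow_dist (bnext P q) a b}"
  by (auto simp: band_seg_def funpow_dist_def)

lemma unvisited_band_cell_index:
  assumes pc: "polycube P" and oc: "ortho_convex_layers P" and cl: "connected_layers P"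
    and i: "1 \<le> i" "i \<le> num_m P" and a: "a \<in> band P i"
    and K: "K < card (band P i)" and r: "r \<in> band P i"
    and unvisited: "r \<notin> band_seg P q a ((bnext P q ^^ K) a)"
  obtains k where "K < k" "k < card (band P i)" "r = (bnext P q ^^ k) a"
proof -
  note enum = funpow_enumerates_orbit(1)[OF orbit_bnext_eq_band[OF pc oc cl i a] a]
  obtain k where k: "k < card (band P i)" "r = (bnext P q ^^ k) a"
    using r bij_betw_imp_surj_on[OF enum] by force
  have "band_seg P q a ((bnext P q ^^ K) a) = (\<lambda>k. (bnext P q ^^ k) a) ` {..K}"
    unfolding band_seg_eq_funpow_image funpow_dist_funpow[OF bij_betw_imp_inj_on[OF enum] K] ..
  then have "K < k" using unvisited k by (auto simp: not_less)
  then show ?thesis using k that by blast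
qed

section \<open>Faces, beams and clips\<close>

lemma ifacefsets_simps:
  "ifacefsets ZP = {(0,0,1),(1,0,1),(0,1,1),(1,1,1)}"
  "ifacefsets ZN = {(0,0,0),(1,0,0),(0,1,0),(1,1,0)}"
  "ifacefsets XP = {(1,0,0),(1,1,0),(1,0,1),(1,1,1)}"
  "ifacefsets XN = {(0,0,0),(0,1,0),(0,0,1),(0,1,1)}"
  "ifacefsets YP = {(0,1,0),(1,1,0),(0,1,1),(1,1,1)}"
  "ifacefsets YN = {(0,0,0),(1,0,0),(0,0,1),(1,0,1)}"
  by (auto simp: ifacefsets_def)

lemma corners_simps:
  "corners ((a,b,w),ZP) = {(a,b,w+1),(a+1,b,w+1),(a,b+1,w+1),(a+1,b+1,w+1)}"
  "corners ((a,b,w),ZN) = {(a,b,w),(a+1,b,w),(a,b+1,w),(a+1,b+1,w)}"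
  "corners ((a,b,w),XP) = {(a+1,b,w),(a+1,b+1,w),(a+1,b,w+1),(a+1,b+1,w+1)}"
  "corners ((a,b,w),XN) = {(a,b,w),(a,b+1,w),(a,b,w+1),(a,b+1,w+1)}"
  "corners ((a,b,w),YP) = {(a,b+1,w),(a+1,b+1,w),(a,b+1,w+1),(a+1,b+1,w+1)}"
  "corners ((a,b,w),YN) = {(a,b,w),(a+1,b,w),(a,b,w+1),(a+1,b,w+1)}"
  by (simp_all add: corners_def ifacefsets_simps)

lemma plane_edge_simps:
  assumes "z = lvl P i"
  shows "plane_edge P i ((x,y,z),XP) = {(x+1,y,z+1),(x+1,y+1,z+1)}"
    "plane_edge P i ((x,y,z),XN) = {(x,y,z+1),(x,y+1,z+1)}"
    "plane_edge P i ((x,y,z),YP) = {(x,y+1,z+1),(x+1,y+1,z+1)}"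
    "plane_edge P i ((x,y,z),YN) = {(x,y,z+1),(x+1,y,z+1)}"
  using assms by (auto simp: plane_edge_def corners_simps lvl_def)

lemma mem_hcells_iff: "((a,b,w),s) \<in> hcells P i \<longleftrightarrow> (a,b,w) \<in> P \<and>
   (s = ZP \<and> w = lvl P i \<and> (a,b,w+1) \<notin> P \<or> s = ZN \<and> w = lvl P i + 1 \<and> (a,b,w-1) \<notin> P)"
  by (auto simp: hcells_def surface_cell_def)

lemma hcells_at_position:
  assumes "h \<in> hcells P i" and "fp (fst h) = (a,b)"
  shows "(a,b,lvl P i) \<in> P \<and> (a,b,lvl P i + 1) \<notin> P \<and> h = ((a,b,lvl P i),ZP) \<or>
    (a,b,lvl P i + 1) \<in> P \<and> (a,b,lvl P i) \<notin> P \<and> h = ((a,b,lvl P i + 1),ZN)"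
  using assms by (cases h) (auto simp: mem_hcells_iff)

lemma cell_adj_common_edge:
  assumes "cell_adj f g"
  obtains p q where "p \<in> corners f" "q \<in> corners f" "p \<in> corners g" "q \<in> corners g" "l1 p q = 1"
proof -
  obtain E where E: "E \<in> cell_edges f" "E \<in> cell_edges g" using assms unfolding cell_adj_def
    by blast
  then obtain p q where "E = {p,q}" "p \<in> corners f" "q \<in> corners f" "l1 p q = 1"
    unfolding cell_edges_def by blast
  moreover have "E \<subseteq> corners g" using E(2) by (auto simp: cell_edges_def)
  ultimately show ?thesis using that by auto
qed

lemma corners_horizontal:
  "p \<in> corners ((a,b,w),ZP) \<longleftrightarrow> (\<exists>u v. (u = 0 \<or> u = 1) \<and> (v = 0 \<or> v = 1) \<and> p = (a+u,b+v,w+1))"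
  "p \<in> corners ((a,b,w),ZN) \<longleftrightarrow> (\<exists>u v. (u = 0 \<or> u = 1) \<and> (v = 0 \<or> v = 1) \<and> p = (a+u,b+v,w))"
  unfolding corners_simps by force+

lemma horizontal_cells_edge_offset:
  assumes "p \<in> corners ((a,b,w),ZP)" "q \<in> corners ((a,b,w),ZP)"
    and "p \<in> corners ((a',b',w+1),ZN)" "q \<in> corners ((a',b',w+1),ZN)" and "l1 p q = 1"
  shows "(a',b') \<in> {(a,b), (a+1,b), (a-1,b), (a,b+1), (a,b-1)}"
proof -
  obtain u1 v1 where p1: "u1 = 0 \<or> u1 = 1" "v1 = 0 \<or> v1 = 1" "p = (a+u1,b+v1,w+1)"
    using assms(1) unfolding corners_horizontal by blast
  obtain u2 v2 where q1: "u2 = 0 \<or> u2 = 1" "v2 = 0 \<or> v2 = 1" "q = (a+u2,b+v2,w+1)"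
    using assms(2) unfolding corners_horizontal by blast
  obtain u3 v3 where p2: "u3 = 0 \<or> u3 = 1" "v3 = 0 \<or> v3 = 1" "p = (a'+u3,b'+v3,w+1)"
    using assms(3) unfolding corners_horizontal by blast
  obtain u4 v4 where q2: "u4 = 0 \<or> u4 = 1" "v4 = 0 \<or> v4 = 1" "q = (a'+u4,b'+v4,w+1)"
    using assms(4) unfolding corners_horizontal by blast
  have l: "\<bar>u1 - u2\<bar> + \<bar>v1 - v2\<bar> = 1" using assms(5) p1 q1 by simp
  have d: "a' - a = u1 - u3" "a' - a = u2 - u4" "b' - b = v1 - v3" "b' - b = v2 - v4"
    using p1 p2 q1 q2 by auto
  have "-1 \<le> a' - a \<and> a' - a \<le> 1" "-1 \<le> b' - b \<and> b' - b \<le> 1"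
    using d(1,3) p1 p2 by auto
  moreover have "a' = a \<or> b' = b"
  proof (rule ccontr)
    assume "\<not> (a' = a \<or> b' = b)"
    then have "u1 = u2" "v1 = v2" using d p1 p2 q1 q2 by auto
    then show False using l by simp
  qed
  ultimately show ?thesis by auto
qed

text \<open>A top cell and a bottom cell of the same plane sharing an edge would make the cube below
  the first and the cube above the second meet in an edge only.\<close>
lemma top_bottom_cells_not_adjacent:
  assumes pc: "polycube P" and f: "((a,b,w),ZP) \<in> hcells P i" and g: "((a',b',w'),ZN) \<in> hcells P i"
  shows "\<not> cell_adj ((a,b,w),ZP) ((a',b',w'),ZN)"
proof
  assume "cell_adj ((a,b,w),ZP) ((a',b',w'),ZN)"
  moreover have f': "(a,b,w) \<in> P" "w = lvl P i" "(a,b,w+1) \<notin> P" using f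
    by (auto simp: mem_hcells_iff)
  moreover have g': "(a',b',w+1) \<in> P" "w' = w + 1" "(a',b',w) \<notin> P" using g f'
    by (auto simp: mem_hcells_iff)
  ultimately have "(a',b') \<in> {(a,b), (a+1,b), (a-1,b), (a,b+1), (a,b-1)}"
    by (metis cell_adj_common_edge horizontal_cells_edge_offset)
  then show False
    using g' f' polycube_no_edge_pinch_above[OF pc f'(1), of XP]
      polycube_no_edge_pinch_above[OF pc f'(1), of XN]
      polycube_no_edge_pinch_above[OF pc f'(1), of YP]
      polycube_no_edge_pinch_above[OF pc f'(1), of YN]
    by (auto simp: horiz_def)
qed

lemma iface_of_top_cell:
  assumes pc: "polycube P" and g: "g \<in> hcells P i" "snd g = ZP" and h: "h \<in> iface P i g"
  shows "snd h = ZP"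
proof -
  have "(g,h) \<in> rtrancl (adj_in (hcells P i))" using h by (simp add: iface_def)
  then have "snd h = ZP \<and> h \<in> hcells P i"
  proof induction
    case (step h1 h2)
    then have "h2 \<in> hcells P i" "cell_adj h1 h2" by (auto simp: adj_in_def)
    then show ?case
      using step.IH top_bottom_cells_not_adjacent[OF pc, of "fst (fst h1)" "fst (snd (fst h1))"]
      by (cases h1, cases h2) (auto simp: mem_hcells_iff)
  qed (use g in simp)
  then show ?thesis by simp
qed

lemma horiz_dir_vectors:
  assumes "horiz d"
  obtains dx dy where "hvec d = (dx,dy)" "dvec d = (dx,dy,0)" "hvec (opp d) = (-dx,-dy)"
    "dvec (opp d) = (-dx,-dy,0)" "(dx,dy) \<noteq> (0,0)" "horiz (opp d)"
  using assms by (cases d) (auto simp: horiz_def)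

lemma beam_anchor_cells:
  assumes r: "((x,y,z),d) \<in> band P i" and f: "f \<in> hcells P i"
    and e: "plane_edge P i ((x,y,z),d) \<in> cell_edges f"
  shows "f = ((x,y,z),ZP) \<or> f = (padd (padd (x,y,z) (dvec d)) (0,0,1), ZN)"
proof -
  obtain a b w s where ff: "f = ((a,b,w),s)" by (metis prod.collapse)
  have "plane_edge P i ((x,y,z),d) \<subseteq> corners f" using e by (auto simp: cell_edges_def)
  then show ?thesis
    using r f ff
    by (cases d) (auto simp: mem_band_iff mem_hcells_iff horiz_def plane_edge_simps corners_simps)
qed

definition beam_step :: "cell \<Rightarrow> cell \<Rightarrow> int \<times> int" where
  "beam_step a f = (if fp (fst f) = fp (fst a) then hvec (opp (snd a)) else hvec (snd a))"

lemma mem_beam_iff: "g \<in> beam P i a \<longleftrightarrow> g \<in> hcells P i \<and>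
   (\<exists>f\<in>hcells P i. plane_edge P i a \<in> cell_edges f \<and>
     (\<exists>k::nat. fp (fst g) = add2 (fp (fst f)) (scale2 (int k) (beam_step a f)) \<and>
       (\<forall>j\<le>k. \<exists>h\<in>hcells P i. fp (fst h) = add2 (fp (fst f)) (scale2 (int j) (beam_step a f)))))"
  by (simp add: beam_def Let_def beam_step_def)

lemma beam_top_anchor:
  assumes pc: "polycube P" and r: "((x,y,z),d) \<in> band P i" and top: "((x,y,z),ZP) \<in> hcells P i"
    and g: "g \<in> beam P i ((x,y,z),d)"
  shows "snd g = ZP"
proof -
  have rr: "(x,y,z) \<in> P" "horiz d" "z = lvl P i" "padd (x,y,z) (dvec d) \<notin> P"
    using r by (auto simp: mem_band_iff)
  obtain dx dy where dxy: "hvec d = (dx,dy)" "dvec d = (dx,dy,0)" "hvec (opp d) = (-dx,-dy)"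
    "dvec (opp d) = (-dx,-dy,0)" "horiz (opp d)"
    using horiz_dir_vectors[OF rr(2)] by metis
  obtain f k where f: "f \<in> hcells P i" "plane_edge P i ((x,y,z),d) \<in> cell_edges f"
    and gk: "fp (fst g) = add2 (fp (fst f)) (scale2 (int k) (beam_step ((x,y,z),d) f))"
    and chain: "\<forall>j\<le>k. \<exists>h\<in>hcells P i.
      fp (fst h) = add2 (fp (fst f)) (scale2 (int j) (beam_step ((x,y,z),d) f))"
    using g unfolding mem_beam_iff by blast
  have "(x+dx,y+dy,z+1) \<notin> P"
    using polycube_no_edge_pinch_above[OF pc rr(1,2,4)] top dxy rr(3) by (simp add: mem_hcells_iff)
  then have "f = ((x,y,z),ZP)" using beam_anchor_cells[OF r f] dxy f(1)
    by (auto simp: mem_hcells_iff)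
  then have step: "beam_step ((x,y,z),d) f = (-dx,-dy)" using dxy by (simp add: beam_step_def)
  have column: "(x - int j*dx, y - int j*dy, z) \<in> P \<and> (x - int j*dx, y - int j*dy, z+1) \<notin> P"
    if "j \<le> k" for j
    using that
  proof (induction j)
    case 0 then show ?case using top rr by (simp add: mem_hcells_iff)
  next
    case (Suc j)
    then have prev: "(x - int j*dx, y - int j*dy, z) \<in> P" "(x - int j*dx, y - int j*dy, z+1) \<notin> P"
      by auto
    obtain h where "h \<in> hcells P i" "fp (fst h) = (x - int (Suc j)*dx, y - int (Suc j)*dy)"
      using chain Suc.prems \<open>f = _\<close> step by (auto simp: algebra_simps)
    from hcells_at_position[OF this] show ?case
    proof (elim disjE conjE)
      assume "(x - int (Suc j)*dx, y - int (Suc j)*dy, lvl P i + 1) \<in> P"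
        and "(x - int (Suc j)*dx, y - int (Suc j)*dy, lvl P i) \<notin> P"
      then show ?case
        using polycube_no_edge_pinch_above[OF pc prev(1) dxy(5)] prev(2) rr(3) dxy(4)
        by (simp add: algebra_simps)
    qed (use rr(3) in simp)
  qed
  have "fp (fst g) = (x - int k*dx, y - int k*dy)" using gk step \<open>f = _\<close> by simp
  moreover have "g \<in> hcells P i" using g by (simp add: mem_beam_iff)
  ultimately show ?thesis using hcells_at_position column[of k] rr(3) by fastforce
qed

lemma cell_adj_side_bottom:
  assumes "horiz d"
  shows "cell_adj ((a,b,w),d) ((a,b,w),ZN)"
proof -
  obtain p q where "p \<in> corners ((a,b,w),d)" "q \<in> corners ((a,b,w),d)"
    "p \<in> corners ((a,b,w),ZN)" "q \<in> corners ((a,b,w),ZN)" "l1 p q = 1"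
  proof (cases d)
    case XP then show ?thesis
      by (intro that[of "(a+1,b,w)" "(a+1,b+1,w)"]) (simp_all add: corners_simps)
  next
    case XN then show ?thesis
      by (intro that[of "(a,b,w)" "(a,b+1,w)"]) (simp_all add: corners_simps)
  next
    case YP then show ?thesis
      by (intro that[of "(a,b+1,w)" "(a+1,b+1,w)"]) (simp_all add: corners_simps)
  next
    case YN then show ?thesis
      by (intro that[of "(a,b,w)" "(a+1,b,w)"]) (simp_all add: corners_simps)
  qed (use assms in \<open>simp_all add: horiz_def\<close>)
  then have "{p,q} \<in> cell_edges ((a,b,w),d) \<inter> cell_edges ((a,b,w),ZN)"
    unfolding cell_edges_def by blast
  moreover have "((a,b,w),d) \<noteq> ((a,b,w),ZN)" using assms by (auto simp: horiz_def)
  ultimately show ?thesis unfolding cell_adj_def by blast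
qed

lemma no_cube_beyond_band_cell:
  assumes oc: "ortho_convex_layers P" and i: "1 \<le> i" "i \<le> num_m P"
    and r: "((x,y,z),d) \<in> band P i" and d: "hvec d = (dx,dy)" and n: "1 \<le> n"
  shows "(x + n*dx, y + n*dy, z) \<notin> P"
proof
  assume "(x + n*dx, y + n*dy, z) \<in> P"
  moreover have rr: "(x,y,z) \<in> P" "horiz d" "z = lvl P i" "padd (x,y,z) (dvec d) \<notin> P"
    using r by (auto simp: mem_band_iff)
  moreover have "dvec d = (dx,dy,0)" using rr(2) d by (cases d) (auto simp: horiz_def)
  ultimately show False using layer_cube_between[OF oc i, of d dx dy x y n 1] d n by simp
qed

lemma beam_bottom_anchor:
  assumes pc: "polycube P" and oc: "ortho_convex_layers P" and i: "1 \<le> i" "i \<le> num_m P"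
    and r: "((x,y,z),d) \<in> band P i"
  defines "F \<equiv> (padd (padd (x,y,z) (dvec d)) (0,0,1), ZN)"
  assumes bottom: "F \<in> hcells P i" and edge: "plane_edge P i ((x,y,z),d) \<in> cell_edges F"
  shows "\<exists>b\<in>band P (Suc i). parallel b ((x,y,z),d) \<and> adj_to b (beam P i ((x,y,z),d))"
proof -
  have rr: "horiz d" "z = lvl P i" using r by (auto simp: mem_band_iff)
  obtain dx dy where dxy: "hvec d = (dx,dy)" "dvec d = (dx,dy,0)" "(dx,dy) \<noteq> (0,0)"
    using horiz_dir_vectors[OF rr(1)] by metis
  define pos where "pos j = (x + (int j + 1) * dx, y + (int j + 1) * dy, z + 1)" for j :: nat
  have "inj (\<lambda>j. pos (Suc j))" using dxy(3) by (auto simp: pos_def inj_def)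
  then have "infinite (range (\<lambda>j. pos (Suc j)))" by (rule range_inj_infinite)
  then have ex: "\<exists>j. pos (Suc j) \<notin> P"
    using pc finite_subset[of "range (\<lambda>j. pos (Suc j))" P] by (auto simp: polycube_def)
  define K where "K = (LEAST j. pos (Suc j) \<notin> P)"
  have K: "pos (Suc K) \<notin> P" unfolding K_def using LeastI_ex[OF ex] .
  have column: "pos j \<in> P" if "j \<le> K" for j
  proof (cases j)
    case 0 then show ?thesis using bottom dxy by (auto simp: F_def pos_def mem_hcells_iff)
  next
    case (Suc j')
    then have "j' < K" using that by simp
    then show ?thesis using not_less_Least[of j' "\<lambda>j. pos (Suc j) \<notin> P"] Suc by (simp add: K_def)
  qed
  have lower_free: "(x + (int j + 1) * dx, y + (int j + 1) * dy, z) \<notin> P" for j :: nat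
    using no_cube_beyond_band_cell[OF oc i r dxy(1), of "int j + 1"] by simp
  have step: "beam_step ((x,y,z),d) F = (dx,dy)" using dxy by (auto simp: F_def beam_step_def)
  have hc: "(pos j, ZN) \<in> hcells P i" if "j \<le> K" for j
    using column[OF that] lower_free[of j] rr(2) by (simp add: pos_def mem_hcells_iff)
  have "(pos K, ZN) \<in> beam P i ((x,y,z),d)"
    unfolding mem_beam_iff
  proof (intro conjI hc[OF order_refl] bexI[OF _ bottom] exI[of _ K])
    show "plane_edge P i ((x,y,z),d) \<in> cell_edges F" by (fact edge)
    show "fp (fst (pos K, ZN)) = add2 (fp (fst F)) (scale2 (int K) (beam_step ((x,y,z),d) F))"
      using dxy step by (simp add: F_def pos_def algebra_simps)
    show "\<forall>j\<le>K. \<exists>h\<in>hcells P i.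
        fp (fst h) = add2 (fp (fst F)) (scale2 (int j) (beam_step ((x,y,z),d) F))"
      using hc dxy step by (force simp: F_def pos_def algebra_simps)
  qed
  moreover have "(pos K, d) \<in> band P (Suc i)"
    using column[of K] K rr dxy
    by (simp add: pos_def band_def surface_cell_def lvl_def algebra_simps)
  moreover have "cell_adj (pos K, d) (pos K, ZN)"
    using cell_adj_side_bottom[OF rr(1)] by (simp add: pos_def)
  ultimately show ?thesis unfolding parallel_def adj_to_def by (intro bexI[of _ "(pos K, d)"]) auto
qed

lemma beam_on_top_or_near_parallel_band_cell:
  assumes pc: "polycube P" and oc: "ortho_convex_layers P" and i: "1 \<le> i" "i \<le> num_m P"
    and r: "r \<in> band P i" and ne: "beam P i r \<noteq> {}"
  shows "(\<forall>g\<in>beam P i r. snd g = ZP) \<or> (\<exists>b\<in>band P (Suc i). parallel b r \<and> adj_to b (beam P i r))"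
proof -
  obtain x y z d where rr: "r = ((x,y,z),d)" by (metis prod.collapse)
  obtain g where "g \<in> beam P i r" using ne by blast
  then obtain f where f: "f \<in> hcells P i" "plane_edge P i r \<in> cell_edges f"
    unfolding mem_beam_iff by blast
  from beam_anchor_cells[OF r[unfolded rr] f[unfolded rr]] show ?thesis
  proof
    assume "f = ((x,y,z),ZP)"
    then show ?thesis using beam_top_anchor[OF pc r[unfolded rr]] f rr by blast
  next
    assume "f = (padd (padd (x,y,z) (dvec d)) (0,0,1), ZN)"
    then show ?thesis using beam_bottom_anchor[OF pc oc i r[unfolded rr]] f rr by blast
  qed
qed

lemma beam_subset_clip: "beam P i r \<subseteq> clip P i p r"
  by (auto simp: clip_def Let_def)

lemma clip_eq_empty_iff: "clip P i p r = {} \<longleftrightarrow> beam P i r = {}"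
proof
  show "clip P i p r = {} \<Longrightarrow> beam P i r = {}" using beam_subset_clip[of P i r p] by blast
  show "beam P i r = {} \<Longrightarrow> clip P i p r = {}" by (simp add: clip_def)
qed

lemma clip_on_top:
  assumes pc: "polycube P" and top: "\<forall>g\<in>beam P i r. snd g = ZP" and a: "a \<in> clip P i p r"
  shows "snd a = ZP"
proof -
  define B where "B = beam P i r"
  define g0 where "g0 = (SOME g. g \<in> B)"
  define t where "t = hvec (tdir p (snd r))"
  define H where "H = {g \<in> iface P i g0. dot2 t (fp (fst g)) \<ge> dot2 t (fp (fst r))}"
  have "B \<noteq> {}" using a by (auto simp: clip_def B_def)
  then have "g0 \<in> B" unfolding g0_def by (simp add: some_in_eq)
  then have "g0 \<in> hcells P i" "snd g0 = ZP" using top by (simp_all add: B_def mem_beam_iff)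
  then have H: "snd h = ZP" if "h \<in> H" for h using iface_of_top_cell[OF pc] that
    by (auto simp: H_def)
  obtain b where b: "b \<in> B" "(b,a) \<in> rtrancl (adj_in H)"
    using a \<open>B \<noteq> {}\<close> by (auto simp: clip_def Let_def B_def g0_def t_def H_def)
  from b(2) show ?thesis
  proof (cases rule: rtranclE)
    case base then show ?thesis using b(1) top by (simp add: B_def)
  next
    case (step y) then show ?thesis using H by (auto simp: adj_in_def)
  qed
qed

lemma clip_and_beam_on_top_if_not_good_R:
  assumes pc: "polycube P" and oc: "ortho_convex_layers P" and i: "1 \<le> i" "i \<le> num_m P"
    and r: "r \<in> band P i" and not_good: "\<not> good_R P i p r"
  shows "clip P i p r \<noteq> {} \<and> (\<forall>a \<in> clip P i p r. snd a = ZP) \<and>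
         \<not> (\<exists>b \<in> band P (Suc i). parallel b r \<and> adj_to b (clip P i p r)) \<and>
         beam P i r \<noteq> {} \<and> (\<forall>a \<in> beam P i r. snd a = ZP) \<and>
         \<not> (\<exists>b \<in> band P (Suc i). parallel b r \<and> adj_to b (beam P i r))"
proof -
  have clip: "clip P i p r \<noteq> {}" "\<not> (\<exists>b \<in> band P (Suc i). parallel b r \<and> adj_to b (clip P i p r))"
    using not_good by (auto simp: good_R_def)
  then have beam: "beam P i r \<noteq> {}" "\<not> (\<exists>b \<in> band P (Suc i). parallel b r \<and> adj_to b (beam P i r))"
    using beam_subset_clip[of P i r p] by (auto simp: clip_eq_empty_iff adj_to_def)
  then have "\<forall>a \<in> beam P i r. snd a = ZP"
    using beam_on_top_or_near_parallel_band_cell[OF pc oc i r] by blast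
  then show ?thesis using clip beam clip_on_top[OF pc] by blast
qed

section \<open>The selection procedure\<close>

lemma selection_run_L_in_band:
  assumes sr: "selection_run P L R p" and i: "2 \<le> i" "i \<le> num_m P"
  shows "L i \<in> band P i"
proof (cases "i = 2")
  case True then show ?thesis using sr by (auto simp: selection_run_def)
next
  case False
  then have "2 \<le> i - 1" "i - 1 < num_m P" using i by auto
  then have "step_ok P (i-1) (L (i-1)) (p (i-1)) (R (i-1)) (L (Suc (i-1))) (p (Suc (i-1)))"
    using sr unfolding selection_run_def by blast
  then have "L (Suc (i-1)) \<in> band P (Suc (i-1))"
    by (auto simp: step_ok_def cand_def split: if_splits)
  then show ?thesis using i by simp
qed

text \<open>The walk around the first band starts right after \<open>R\<^sub>1\<close>, so it visits every cell.\<close>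
lemma first_band_visited:
  assumes pc: "polycube P" and oc: "ortho_convex_layers P" and cl: "connected_layers P"
    and sr: "selection_run P L R p" and m: "1 \<le> num_m P" and r: "r \<in> band P 1"
  shows "r \<in> band_seg P (p 1) (L 1) (R 1)"
proof (rule ccontr)
  assume unvisited: "r \<notin> band_seg P (p 1) (L 1) (R 1)"
  have R1: "R 1 \<in> band P 1" and L1: "L 1 = bnext P CCW (R 1)" and p1: "p 1 = CCW"
    using sr by (auto simp: selection_run_def)
  define N where "N = card (band P 1)"
  have "N > 0" using R1 finite_band pc by (auto simp: N_def polycube_def card_gt_0_iff)
  then have "(bnext P CCW ^^ (N - 1)) (L 1) = (bnext P CCW ^^ Suc (N - 1)) (R 1)"
    by (simp only: L1 funpow_Suc_right comp_def)
  also have "\<dots> = (bnext P CCW ^^ N) (R 1)" using \<open>N > 0\<close> by simp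
  also have "\<dots> = R 1"
    using funpow_enumerates_orbit(2)[OF orbit_bnext_eq_band[OF pc oc cl order_refl m R1] R1]
    by (simp add: N_def)
  finally have "r \<notin> band_seg P CCW (L 1) ((bnext P CCW ^^ (N - 1)) (L 1))"
    using unvisited p1 by simp
  moreover have "L 1 \<in> band P 1" using L1 bnext_in_band[OF R1] by simp
  ultimately obtain k where "N - 1 < k" "k < N"
    using unvisited_band_cell_index[OF pc oc cl order_refl m] \<open>N > 0\<close> r
    by (metis N_def diff_less zero_less_one)
  then show False by simp
qed

lemma unvisited_not_good_R:
  assumes pc: "polycube P" and oc: "ortho_convex_layers P" and cl: "connected_layers P"
    and sr: "selection_run P L R p" and i: "2 \<le> i" "i < num_m P"
    and r: "r \<in> band P i" and unvisited: "r \<notin> band_seg P (p i) (L i) (R i)"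
  shows "\<not> good_R P i (p i) r"
proof -
  have "step_ok P i (L i) (p i) (R i) (L (Suc i)) (p (Suc i))"
    using sr i unfolding selection_run_def by blast
  then obtain K where K: "K < card (band P i)" "R i = (bnext P (p i) ^^ K) (L i)"
    and last: "\<And>k. K < k \<Longrightarrow> k < card (band P i) \<Longrightarrow> \<not> good_R P i (p i) ((bnext P (p i) ^^ k) (L i))"
    unfolding step_ok_def selects_R_def by blast
  have "1 \<le> i" "i \<le> num_m P" using i by auto
  with unvisited_band_cell_index[OF pc oc cl this selection_run_L_in_band[OF sr i(1)] K(1) r]
  show ?thesis using unvisited K(2) last by (metis less_imp_le)
qed

theorem lemma6:
  fixes P :: "pt set" and L R :: "nat \<Rightarrow> cell" and p :: "nat \<Rightarrow> pointer"
    and i :: nat and r :: cell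
  assumes "polycube P"
    and "ortho_convex_layers P"
    and "connected_layers P"
    and "selection_run P L R p"
    and "1 \<le> i" and "i \<le> num_m P - 1"
    and "r \<in> band P i"
    and "r \<notin> band_seg P (p i) (L i) (R i)"
  shows "clip P i (p i) r \<noteq> {} \<and> (\<forall>a \<in> clip P i (p i) r. snd a = ZP) \<and>
         \<not> (\<exists>b \<in> band P (Suc i). parallel b r \<and> adj_to b (clip P i (p i) r)) \<and>
         beam P i r \<noteq> {} \<and> (\<forall>a \<in> beam P i r. snd a = ZP) \<and>
         \<not> (\<exists>b \<in> band P (Suc i). parallel b r \<and> adj_to b (beam P i r))"
proof -
  have i: "1 \<le> i" "i \<le> num_m P" "i < num_m P" using assms(5,6) by auto
  have "i \<noteq> 1"
  proof
    assume "i = 1"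
    then show False using first_band_visited[OF assms(1-4), of r] i assms(7,8) by simp
  qed
  then have "\<not> good_R P i (p i) r"
    using unvisited_not_good_R[OF assms(1-4) _ i(3) assms(7,8)] i(1) by simp
  then show ?thesis by (rule clip_and_beam_on_top_if_not_good_R[OF assms(1,2) i(1,2) assms(7)])
qed

end
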